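(* Suppose every player $i\in\mathcal P$ plays according to ICFR (described below), where every internal-regret minimizer used is a no-internal-regret algorithm and every external-regret minimizer used is a no-external-regret algorithm. Let $\bar\mu^T$ be the empirical frequency of the resulting joint plans $\pi^1,\dots,\pi^T$. Then, almost surely, $\bar\mu^T$ converges to the set of EFCEs: $\limsup_{T\to\infty}\delta(\bar\mu^T)\le 0$, so for every $\epsilon>0$, $\bar\mu^T$ is eventually an $\epsilon$-EFCE. ICFR for player $i$ is defined as follows. - For each $I\in\mathcal I_i$, maintain an internal-regret minimizer $\mathcal R^{\rm int}_I$ over $A(I)$. - For each $I\in\mathcal I_i$ and each $\sigma\in\Sigma^c_i(I)$, maintain an external-regret minimizer $\mathcal R^{\rm ext}_{\sigma,I}$ over $A(I)$. At round $t$, player $i$ builds $\pi_i^t$ by processing infosets in an order consistent with $\preceq$. - If the actions already chosen at the strict predecessors of $I$ place $\pi^t_i$ in $\Pi_i(I)$, then $\pi_i^t(I)$ is the action output by $\mathcal R^{\rm int}_I$. - Otherwise, let $\sigma_I^t=(K,\pi_i^t(K))$, where $K$ is the unique strict predecessor of $I$ with $\pi_i^t\in\Pi_i(K)$ and $\pi^t_i(K)$ different from the action leading from $K$ toward $I$. Then $\pi_i^t(I)$ is the action output by $\mathcal R^{\rm ext}_{\sigma_I^t,I}$. After all players' plans $\pi^t$ are fixed, player $i$ computes $\hat u_I^t$. Then: - each $\mathcal R^{\rm int}_I$ observes the utility vector $a\mapsto\mathbb 1[\pi_i^t\in\Pi_i(I)]\,\hat u_I^t(a)$; - each $\mathcal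 R^{\rm ext}_{\sigma,I}$ observes $a\mapsto\mathbb 1[\pi_i^t\in\Pi_i(\sigma)]\,\hat u_I^t(a)$.
   Context: Setting: a finite extensive-form game with players $\mathcal P$ and a chance player with fixed probabilities. $Z$ is the set of terminal nodes, $u_i:Z\to\mathbb R$ the payoffs, and $p_c(z)$ the product of chance probabilities on the root-to-$z$ path. $\mathcal I_i$ is player $i$'s set of infosets and $A(I)$ is the action set at $I$. The game has perfect recall. $I\preceq J$ means a path goes from a node of $I$ to a node of $J$ (reflexive); a strict predecessor of $I$ is $J\preceq I$ with $J\ne I$. $\mathcal C(I,a)$ is the set of player-$i$ infosets reachable from $I$ via a path starting with $a$ and not passing through another player-$i$ infoset. Plans: $\Pi_i=\prod_{I\in\mathcal I_i}A(I)$, $\Pi=\prod_i\Pi_i$. The sequences of player $i$ are $\Sigma_i=\{(I,a)\}\cup\{\varnothing_i\}$. $\Pi_i(I)$ is the set of plans choosing $b$ at every player-$i$ pair $(K,b)$ on the root path to $I$ (this depends only on the plan's values at strict predecessors of $I$), and $\Pi_i((I,a))=\{\pi_i\in\Pi_i(I):\pi_i(I)=a\}$. $\Pi_i(z)$ and $\Pi_{-i}(z)$ are the plans (profiles) choosing the path actions to terminal node $z$, and $\Pi(z)=\prod_i\Pi_i(z)$. $\Sigma^c_i(I)$ is the set of pairs $(K,b)$ where $K$ is a strict predecessor of $I$ and $b\in A(K)$ is not the action on the path from $K$ to $I$. $Z(I)$ and $Z(I,a)$ are the terminal nodes below $I$, respectively below $I$ via $a$. Immediate utilities: $u_i^t[I,a]=\sum_{z\in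 Z(I,a)\setminus\bigcup_{K\in\mathcal C(I,a)}Z(K)}\mathbb 1[\pi^t_{-i}\in\Pi_{-i}(z)]p_c(z)u_i(z)$. Values: $V_I^t(\pi_i)=u_i^t[I,\pi_i(I)]+\sum_{K\in\mathcal C(I,\pi_i(I))}V_K^t(\pi_i)$. Local utility: $\hat u_I^t(a)=u_i^t[I,a]+\sum_{K\in\mathcal C(I,a)}V_K^t(\pi_i^t)$. A regret minimizer over a finite set $A$ outputs an action $a^t\in A$ (possibly randomized, based on the past) and then observes a bounded utility vector $u^t:A\to\mathbb R$ (possibly chosen adaptively). - It is no-internal-regret if almost surely $\max_{x,\hat x\in A}\sum_{t\le T}\mathbb 1[a^t=x](u^t(\hat x)-u^t(x))=o(T)$. - It is no-external-regret if almost surely $\max_{\hat x}\sum_{t\le T}(u^t(\hat x)-u^t(a^t))=o(T)$. Empirical frequency: $\bar\mu^T(\pi)=|\{t\le T:\pi^t=\pi\}|/T$. For $\mu\in\Delta_\Pi$, $\sigma=(I,a)$, $\hat\mu_i\in\Delta_{\Pi_i(I)}$: \[ p^\sigma_{\mu,\hat\mu_i}(z)=\Big(\sum_{\pi_i\in\Pi_i(\sigma),\pi_{-i}\in\Pi_{-i}(z)}\mu(\pi_i,\pi_{-i})\Big)\Big(\sum_{\hat\pi_i\in\Pi_i(z)}\hat\mu_i(\hat\pi_i)\Big)p_c(z), \] and $q_\mu(z)=\big(\sum_{\pi\in\Pi(z)}\mu(\pi)\big)p_c(z)$. Maximum deviation: \[ \delta(\mu)=\max_i\max_{\sigma=(I,a)}\Big\{\max_{\hat\mu_i\in\Delta_{\Pi_i(I)}}\sum_{z\in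 Z(I)}p^\sigma_{\mu,\hat\mu_i}(z)u_i(z)-\sum_{z\in Z(I,a)}q_\mu(z)u_i(z)\Big\}. \] An EFCE is a $\mu$ with $\delta(\mu)\le0$; an $\epsilon$-EFCE is a $\mu$ with $\delta(\mu)\le\epsilon$. *)

theory Defs
  imports "HOL-Probability.Probability" "HOL-Library.Sublist" "HOL-Library.Landau_Symbols"
begin

text \<open>Rounds are t = 1,2,...; a t is the action output at round t, uv t the utility vector
  observed at round t.\<close>

definition int_regret :: "'a set \<Rightarrow> (nat \<Rightarrow> 'a) \<Rightarrow> (nat \<Rightarrow> 'a \<Rightarrow> real) \<Rightarrow> nat \<Rightarrow> real" where
  "int_regret A a uv T =
     Max {(\<Sum>t\<in>{1..T}. (if a t = x then uv t xh - uv t x else 0)) | x xh. x \<in> A \<and> xh \<in> A}"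

definition ext_regret :: "'a set \<Rightarrow> (nat \<Rightarrow> 'a) \<Rightarrow> (nat \<Rightarrow> 'a \<Rightarrow> real) \<Rightarrow> nat \<Rightarrow> real" where
  "ext_regret A a uv T = Max {(\<Sum>t\<in>{1..T}. uv t xh - uv t (a t)) | xh. xh \<in> A}"

definition Delta :: "'x set \<Rightarrow> ('x \<Rightarrow> real) set" where
  "Delta S = {\<mu>. (\<forall>x. 0 \<le> \<mu> x) \<and> (\<forall>x. x \<notin> S \<longrightarrow> \<mu> x = 0) \<and> sum \<mu> S = 1}"

text \<open>Nodes are histories (lists of actions) in a finite prefix-closed set H.
  owner h = None: chance node; owner h = Some i: node of player i.
  info h: the information set of a player node h. pc h a: chance probability of a at h.
  u i z: payoff of player i at terminal z.\<close>

locale efg =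
  fixes Pl :: "'p set"
    and H :: "'a list set"
    and owner :: "'a list \<Rightarrow> 'p option"
    and info :: "'a list \<Rightarrow> 'i"
    and pc :: "'a list \<Rightarrow> 'a \<Rightarrow> real"
    and u :: "'p \<Rightarrow> 'a list \<Rightarrow> real"
begin

definition acts :: "'a list \<Rightarrow> 'a set" where
  "acts h = {a. h @ [a] \<in> H}"

definition Z :: "'a list set" where
  "Z = {z \<in> H. acts z = {}}"

definition D :: "'a list set" where
  "D = H - Z"

definition seq :: "'p \<Rightarrow> 'a list \<Rightarrow> ('i \<times> 'a) list" where
  "seq i h = [(info (take k h), h ! k). k \<leftarrow> [0..<length h], owner (take k h) = Some i]"

definition nodes :: "'i \<Rightarrow> 'a list set" where
  "nodes I = {h \<in> D. owner h \<noteq> None \<and> info h = I}"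

definition Inf :: "'p \<Rightarrow> 'i set" where
  "Inf i = info ` {h \<in> D. owner h = Some i}"

definition Act :: "'i \<Rightarrow> 'a set" where
  "Act I = (\<Union>h\<in>nodes I. acts h)"

definition preceq :: "'i \<Rightarrow> 'i \<Rightarrow> bool" where
  "preceq I J \<longleftrightarrow> (\<exists>h\<in>nodes I. \<exists>h'\<in>nodes J. prefix h h')"

definition Plans :: "'p \<Rightarrow> ('i \<Rightarrow> 'a) set" where
  "Plans i = (\<Pi>\<^sub>E I\<in>Inf i. Act I)"

definition Joint :: "('p \<Rightarrow> 'i \<Rightarrow> 'a) set" where
  "Joint = (\<Pi>\<^sub>E i\<in>Pl. Plans i)"

definition reaches :: "'p \<Rightarrow> ('i \<Rightarrow> 'a) \<Rightarrow> 'a list \<Rightarrow> bool" where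
  "reaches i p h \<longleftrightarrow> (\<forall>k<length h. owner (take k h) = Some i \<longrightarrow> p (info (take k h)) = h ! k)"

definition PiI :: "'p \<Rightarrow> 'i \<Rightarrow> ('i \<Rightarrow> 'a) set" where
  "PiI i I = {p \<in> Plans i. \<exists>h\<in>nodes I. reaches i p h}"

definition PiS :: "'p \<Rightarrow> 'i \<times> 'a \<Rightarrow> ('i \<Rightarrow> 'a) set" where
  "PiS i \<sigma> = {p \<in> PiI i (fst \<sigma>). p (fst \<sigma>) = snd \<sigma>}"

definition PiZ :: "'p \<Rightarrow> 'a list \<Rightarrow> ('i \<Rightarrow> 'a) set" where
  "PiZ i z = {p \<in> Plans i. reaches i p z}"

definition others_reach :: "'p \<Rightarrow> ('p \<Rightarrow> 'i \<Rightarrow> 'a) \<Rightarrow> 'a list \<Rightarrow> bool" where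
  "others_reach i \<pi> z \<longleftrightarrow> (\<forall>j\<in>Pl. j \<noteq> i \<longrightarrow> reaches j (\<pi> j) z)"

definition pcz :: "'a list \<Rightarrow> real" where
  "pcz z = (\<Prod>k\<in>{k. k < length z \<and> owner (take k z) = None}. pc (take k z) (z ! k))"

definition C :: "'p \<Rightarrow> 'i \<Rightarrow> 'a \<Rightarrow> 'i set" where
  "C i I a = {J \<in> Inf i. \<exists>h\<in>nodes I. \<exists>h'\<in>nodes J. prefix (h @ [a]) h' \<and>
               (\<forall>k. length h < k \<and> k < length h' \<longrightarrow> owner (take k h') \<noteq> Some i)}"

definition Sigc :: "'p \<Rightarrow> 'i \<Rightarrow> ('i \<times> 'a) set" where
  "Sigc i I = {(K, b). K \<in> Inf i \<and> preceq K I \<and> K \<noteq> I \<and> b \<in> Act K \<and>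
                 (\<forall>h\<in>nodes I. \<forall>k<length h. take k h \<in> nodes K \<longrightarrow> h ! k \<noteq> b)}"

definition ZI :: "'i \<Rightarrow> 'a list set" where
  "ZI I = {z \<in> Z. \<exists>h\<in>nodes I. prefix h z}"

definition ZIa :: "'i \<Rightarrow> 'a \<Rightarrow> 'a list set" where
  "ZIa I a = {z \<in> Z. \<exists>h\<in>nodes I. prefix (h @ [a]) z}"

definition imm_u :: "'p \<Rightarrow> ('p \<Rightarrow> 'i \<Rightarrow> 'a) \<Rightarrow> 'i \<Rightarrow> 'a \<Rightarrow> real" where
  "imm_u i \<pi> I a = (\<Sum>z\<in>ZIa I a - (\<Union>K\<in>C i I a. ZI K).
      (if others_reach i \<pi> z then 1 else 0) * pcz z * u i z)"

fun Vn :: "nat \<Rightarrow> 'p \<Rightarrow> ('p \<Rightarrow> 'i \<Rightarrow> 'a) \<Rightarrow> 'i \<Rightarrow> ('i \<Rightarrow> 'a) \<Rightarrow> real" where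
  "Vn 0 i \<pi> I p = 0"
| "Vn (Suc n) i \<pi> I p = imm_u i \<pi> I (p I) + (\<Sum>K\<in>C i I (p I). Vn n i \<pi> K p)"

text \<open>Since infosets in \<C>(I,a) lie strictly deeper in the finite tree, card H unrollings
  reach the bottom of the recursion, so this is exactly the recursively defined V_I.\<close>
definition V :: "'p \<Rightarrow> ('p \<Rightarrow> 'i \<Rightarrow> 'a) \<Rightarrow> 'i \<Rightarrow> ('i \<Rightarrow> 'a) \<Rightarrow> real" where
  "V i \<pi> I p = Vn (card H) i \<pi> I p"

definition local_u :: "'p \<Rightarrow> ('p \<Rightarrow> 'i \<Rightarrow> 'a) \<Rightarrow> 'i \<Rightarrow> 'a \<Rightarrow> real" where
  "local_u i \<pi> I a = imm_u i \<pi> I a + (\<Sum>K\<in>C i I a. V i \<pi> K (\<pi> i))"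

definition sigma_of :: "'p \<Rightarrow> 'i \<Rightarrow> ('i \<Rightarrow> 'a) \<Rightarrow> 'i \<times> 'a" where
  "sigma_of i I p = (THE \<sigma>. \<sigma> \<in> Sigc i I \<and> p \<in> PiS i \<sigma>)"

definition psig :: "'p \<Rightarrow> 'i \<times> 'a \<Rightarrow> (('p \<Rightarrow> 'i \<Rightarrow> 'a) \<Rightarrow> real) \<Rightarrow> (('i \<Rightarrow> 'a) \<Rightarrow> real) \<Rightarrow> 'a list \<Rightarrow> real" where
  "psig i \<sigma> \<mu> \<mu>h z =
     (\<Sum>\<pi>\<in>{\<pi>\<in>Joint. \<pi> i \<in> PiS i \<sigma> \<and> others_reach i \<pi> z}. \<mu> \<pi>) *
     (\<Sum>p\<in>PiZ i z. \<mu>h p) * pcz z"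

definition q :: "(('p \<Rightarrow> 'i \<Rightarrow> 'a) \<Rightarrow> real) \<Rightarrow> 'a list \<Rightarrow> real" where
  "q \<mu> z = (\<Sum>\<pi>\<in>{\<pi>\<in>Joint. \<forall>j\<in>Pl. reaches j (\<pi> j) z}. \<mu> \<pi>) * pcz z"

text \<open>Maximum deviation \<delta>(\<mu>) (extended-real valued; the maxima are suprema, and the
  supremum over the empty set is -\<infinity>).\<close>
definition delta :: "(('p \<Rightarrow> 'i \<Rightarrow> 'a) \<Rightarrow> real) \<Rightarrow> ereal" where
  "delta \<mu> = (SUP i\<in>Pl. SUP \<sigma>\<in>{(I, a). I \<in> Inf i \<and> a \<in> Act I}.
      (SUP \<mu>h\<in>Delta (PiI i (fst \<sigma>)). ereal (\<Sum>z\<in>ZI (fst \<sigma>). psig i \<sigma> \<mu> \<mu>h z * u i z))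
      - ereal (\<Sum>z\<in>ZIa (fst \<sigma>) (snd \<sigma>). q \<mu> z * u i z))"

definition EFCE :: "(('p \<Rightarrow> 'i \<Rightarrow> 'a) \<Rightarrow> real) \<Rightarrow> bool" where
  "EFCE \<mu> \<longleftrightarrow> \<mu> \<in> Delta Joint \<and> delta \<mu> \<le> 0"

definition eps_EFCE :: "real \<Rightarrow> (('p \<Rightarrow> 'i \<Rightarrow> 'a) \<Rightarrow> real) \<Rightarrow> bool" where
  "eps_EFCE \<epsilon> \<mu> \<longleftrightarrow> \<mu> \<in> Delta Joint \<and> delta \<mu> \<le> ereal \<epsilon>"

end

locale wf_efg = efg Pl H owner info pc u
  for Pl :: "'p set" and H :: "'a list set" and owner :: "'a list \<Rightarrow> 'p option"
    and info :: "'a list \<Rightarrow> 'i" and pc :: "'a list \<Rightarrow> 'a \<Rightarrow> real" and u :: "'p \<Rightarrow> 'a list \<Rightarrow> real" +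
  assumes finite_Pl: "finite Pl"
    and finite_H: "finite H"
    and root: "[] \<in> H"
    and prefix_closed: "\<And>h a. h @ [a] \<in> H \<Longrightarrow> h \<in> H"
    and owner_ok: "\<And>h. h \<in> D \<Longrightarrow> owner h = None \<or> (\<exists>i\<in>Pl. owner h = Some i)"
    and chance_nonneg: "\<And>h a. h \<in> D \<Longrightarrow> owner h = None \<Longrightarrow> a \<in> acts h \<Longrightarrow> 0 \<le> pc h a"
    and chance_sum: "\<And>h. h \<in> D \<Longrightarrow> owner h = None \<Longrightarrow> (\<Sum>a\<in>acts h. pc h a) = 1"
    and infoset_consistent: "\<And>h h' i j. h \<in> D \<Longrightarrow> h' \<in> D \<Longrightarrow> owner h = Some i \<Longrightarrow>
           owner h' = Some j \<Longrightarrow> info h = info h' \<Longrightarrow> i = j \<and> acts h = acts h'"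
    and perfect_recall: "\<And>h h' i. h \<in> D \<Longrightarrow> h' \<in> D \<Longrightarrow> owner h = Some i \<Longrightarrow>
           owner h' = Some i \<Longrightarrow> info h = info h' \<Longrightarrow> seq i h = seq i h'"

definition emp_freq :: "(nat \<Rightarrow> 'x) \<Rightarrow> nat \<Rightarrow> 'x \<Rightarrow> real" where
  "emp_freq \<pi>s T = (\<lambda>p. real (card {t\<in>{1..T}. \<pi>s t = p}) / real T)"

end

theory Submission
  imports Defs
begin

text \<open>Fix a run. For a trigger (I, a) and a continuation \<mu>h, the deviation gain in the maximum
  deviation of the empirical frequency is the average, over the rounds whose plan lies in
  \<Pi>_i((I, a)), of V_I(p) - V_I(\<pi>_i^t) weighted by \<mu>h(p). Unrolling the recursion for V along
  the infosets J below I that p reaches, this splits into local utility differences at the J.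
  At each J the rounds are partitioned by whether \<pi>_i^t reaches J (then the internal regret
  minimizer of J chose \<pi>_i^t(J)) or which trigger sequence \<sigma> of J it satisfies (then the external
  minimizer of (\<sigma>, J) chose it); perfect recall puts each part entirely inside or entirely
  outside the trigger event. So the gain is at most a fixed combination of all regrets divided by T,
  which tends to 0 on the almost sure event on which every regret minimizer has sublinear regret.\<close>

lemma prefix_snoc_takeD:
  "prefix (g @ [x]) h \<Longrightarrow>
   length g < length h \<and> take (length g) h = g \<and> h ! length g = x \<and> take (Suc (length g)) h = g @ [x]"
  by (auto simp: prefix_def nth_append)

lemma int_regret_ge:
  "finite A \<Longrightarrow> x \<in> A \<Longrightarrow> xh \<in> A \<Longrightarrow>
   (\<Sum>t\<in>{1..T}. if a t = x then uv t xh - uv t x else 0) \<le> int_regret A a uv T"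
  unfolding int_regret_def by (rule Max_ge) (auto simp: finite_image_set2)

lemma ext_regret_ge:
  "finite A \<Longrightarrow> xh \<in> A \<Longrightarrow> (\<Sum>t\<in>{1..T}. uv t xh - uv t (a t)) \<le> ext_regret A a uv T"
  unfolding ext_regret_def by (rule Max_ge) auto

text \<open>Regret against a fixed action splits into |A| internal regrets, one per action played.\<close>

lemma fixed_regret_le_int_regret:
  assumes A: "finite A" and y: "y \<in> A" and a: "\<And>t. a t \<in> A"
  shows "(\<Sum>t\<in>{1..T}. uv t y - uv t (a t)) \<le> real (card A) * max 0 (int_regret A a uv T)"
proof -
  have "(\<Sum>t\<in>{1..T}. uv t y - uv t (a t)) = (\<Sum>x\<in>A. \<Sum>t\<in>{1..T}. if a t = x then uv t y - uv t x else 0)"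
    by (subst sum.swap) (simp add: sum.delta'[OF A] a)
  also have "\<dots> \<le> (\<Sum>x\<in>A. max 0 (int_regret A a uv T))"
    by (intro sum_mono max.coboundedI2 int_regret_ge[OF A _ y])
  finally show ?thesis by simp
qed

lemma sum_indicator_subset_or_disjoint:
  fixes f :: "'b \<Rightarrow> real"
  assumes "S \<subseteq> P \<or> S \<inter> P = {}"
  shows "(\<Sum>t\<in>A. (if x t \<in> S then 1 else 0) * ((if x t \<in> P then 1 else 0) * f t))
    \<le> max 0 (\<Sum>t\<in>A. (if x t \<in> S then 1 else 0) * f t)"
proof (cases "S \<subseteq> P")
  case True
  then have "(\<Sum>t\<in>A. (if x t \<in> S then 1 else 0) * ((if x t \<in> P then 1 else 0) * f t))
      = (\<Sum>t\<in>A. (if x t \<in> S then 1 else 0) * f t)"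
    by (intro sum.cong) auto
  then show ?thesis by simp
next
  case False
  then have "(\<Sum>t\<in>A. (if x t \<in> S then 1 else 0) * ((if x t \<in> P then 1 else 0) * f t)) = 0"
    using assms by (intro sum.neutral) auto
  then show ?thesis by simp
qed

lemma sum_emp_freq:
  assumes "finite S"
  shows "(\<Sum>x\<in>S. emp_freq f T x) = (\<Sum>t\<in>{1..T}. if f t \<in> S then 1 else 0) / real T"
proof -
  have "real (card {t\<in>{1..T}. f t = x}) = (\<Sum>t\<in>{1..T}. if f t = x then 1 else 0)" for x
    unfolding real_of_card by (rule sum.inter_filter) simp
  then have "(\<Sum>x\<in>S. emp_freq f T x) = (\<Sum>x\<in>S. \<Sum>t\<in>{1..T}. if f t = x then 1 else 0) / real T"
    unfolding emp_freq_def by (simp add: sum_divide_distrib)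
  also have "\<dots> = (\<Sum>t\<in>{1..T}. if f t \<in> S then 1 else 0) / real T"
    by (subst sum.swap) (simp add: sum.delta'[OF assms])
  finally show ?thesis .
qed

lemma emp_freq_Delta:
  assumes "\<And>t. f t \<in> S" "finite S" "0 < T"
  shows "emp_freq f T \<in> Delta S"
proof -
  have "emp_freq f T x = 0" if "x \<notin> S" for x
    using assms(1) that by (auto simp: emp_freq_def)
  moreover have "sum (emp_freq f T) S = 1" using sum_emp_freq[OF assms(2)] assms by simp
  ultimately show ?thesis by (simp add: Delta_def emp_freq_def)
qed

lemma smallo_imp_max0_div_tendsto_0:
  fixes f :: "nat \<Rightarrow> real"
  assumes "f \<in> o(\<lambda>T. real T)"
  shows "((\<lambda>T. max 0 (f T) / real T) \<longlongrightarrow> 0) sequentially"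
proof -
  have "((\<lambda>T. max 0 (f T / real T)) \<longlongrightarrow> max 0 0) sequentially"
    by (intro tendsto_max tendsto_const smalloD_tendsto[OF assms])
  then show ?thesis by (simp add: max_divide_distrib_right)
qed

context wf_efg
begin

section \<open>Game trees\<close>

lemma prefix_in_H: assumes "h \<in> H" "prefix g h" shows "g \<in> H"
proof -
  obtain r where r: "h = g @ r" using assms(2) by (auto simp: prefix_def)
  have "g @ r \<in> H \<Longrightarrow> g \<in> H" for g
  proof (induction r arbitrary: g rule: rev_induct)
    case (snoc x xs)
    then show ?case using prefix_closed[of "g @ xs" x] by simp
  qed simp
  then show ?thesis using assms(1) r by simp
qed

lemma take_in_H: "h \<in> H \<Longrightarrow> take k h \<in> H"
  using prefix_in_H take_is_prefix by blast

lemma take_in_D: assumes "h \<in> H" "k < length h" shows "take k h \<in> D"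
proof -
  have "take k h @ [h ! k] \<in> H"
    using take_in_H[OF assms(1), of "Suc k"] assms(2) by (simp add: take_Suc_conv_app_nth)
  then have "h ! k \<in> acts (take k h)" by (simp add: acts_def)
  then show ?thesis using take_in_H[OF assms(1)] by (auto simp: D_def Z_def)
qed

lemma length_lt_card_H: assumes "h \<in> H" shows "length h < card H"
proof -
  have "inj_on (\<lambda>k. take k h) {0..length h}"
    by (rule inj_onI) (metis atLeastAtMost_iff length_take min.absorb2)
  then have "card {0..length h} = card ((\<lambda>k. take k h) ` {0..length h})"
    by (simp add: card_image)
  also have "\<dots> \<le> card H"
    using take_in_H[OF assms] by (intro card_mono[OF finite_H]) auto
  finally show ?thesis by simp
qed

lemma finite_acts: "finite (acts h)"
proof -
  have "acts h = (\<lambda>a. h @ [a]) -` H" by (auto simp: acts_def)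
  then show ?thesis using finite_vimageI[OF finite_H, of "\<lambda>a. h @ [a]"] by (simp add: inj_def)
qed

lemma finite_D: "finite D" using finite_H by (simp add: D_def)
lemma finite_Z: "finite Z" using finite_H by (simp add: Z_def)
lemma finite_nodes: "finite (nodes I)" using finite_D by (simp add: nodes_def)
lemma finite_Inf: "finite (Inf i)" using finite_D by (simp add: Inf_def)
lemma finite_Act: "finite (Act I)" using finite_nodes finite_acts by (simp add: Act_def)
lemma finite_Plans: "finite (Plans i)" by (simp add: Plans_def finite_PiE finite_Inf finite_Act)
lemma finite_Joint: "finite Joint" by (simp add: Joint_def finite_PiE finite_Pl finite_Plans)
lemma finite_Joint_Collect: "finite {\<pi>\<in>Joint. P \<pi>}"
  using finite_Joint by simp

lemma finite_C: "finite (C i I a)" using finite_Inf by (simp add: C_def)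
lemma finite_ZI: "finite (ZI I)" using finite_Z by (simp add: ZI_def)
lemma finite_ZIa: "finite (ZIa I a)" using finite_Z by (simp add: ZIa_def)

lemma finite_Sigc: "finite (Sigc i I)"
proof (rule finite_subset)
  show "Sigc i I \<subseteq> Inf i \<times> (\<Union>K\<in>Inf i. Act K)" by (auto simp: Sigc_def)
qed (use finite_Inf finite_Act in blast)

lemma nodes_InfD:
  assumes "I \<in> Inf i" "h \<in> nodes I"
  shows "h \<in> H" "h \<in> D" "owner h = Some i" "info h = I"
proof -
  obtain h0 where "h0 \<in> D" "owner h0 = Some i" "info h0 = I" using assms(1) by (auto simp: Inf_def)
  moreover obtain j where "h \<in> D" "owner h = Some j" "info h = I" using assms(2) by (auto simp: nodes_def)
  ultimately show "h \<in> D" "owner h = Some i" "info h = I" using infoset_consistent[of h0 h i j] by auto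
  then show "h \<in> H" by (simp add: D_def)
qed

lemma ex_node: "I \<in> Inf i \<Longrightarrow> \<exists>h. h \<in> nodes I"
  by (auto simp: Inf_def nodes_def)

lemma take_in_nodes:
  "h \<in> H \<Longrightarrow> k < length h \<Longrightarrow> owner (take k h) = Some i \<Longrightarrow> info (take k h) = K \<Longrightarrow>
   take k h \<in> nodes K \<and> K \<in> Inf i"
  using take_in_D by (auto simp: nodes_def Inf_def)

lemma seq_eq_nodes: "I \<in> Inf i \<Longrightarrow> h \<in> nodes I \<Longrightarrow> h' \<in> nodes I \<Longrightarrow> seq i h = seq i h'"
  using nodes_InfD perfect_recall by metis

lemma Plans_Act: "p \<in> Plans i \<Longrightarrow> K \<in> Inf i \<Longrightarrow> p K \<in> Act K"
  by (auto simp: Plans_def PiE_def)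

section \<open>Player sequences and plans\<close>

lemma seq_take: "n \<le> length h \<Longrightarrow>
  seq i (take n h) = [(info (take k h), h ! k). k \<leftarrow> [0..<n], owner (take k h) = Some i]"
  unfolding seq_def by (auto intro!: arg_cong[where f=concat] map_cong simp: min_def)

lemma seq_snoc: "seq i (h @ [x]) = seq i h @ (if owner h = Some i then [(info h, x)] else [])"
proof -
  have "[(info (take k (h @ [x])), (h @ [x]) ! k). k \<leftarrow> [0..<length h], owner (take k (h @ [x])) = Some i]
      = seq i h"
    unfolding seq_def by (auto intro!: arg_cong[where f=concat] map_cong simp: nth_append)
  then show ?thesis by (simp add: seq_def)
qed

lemma set_seq: "(X, y) \<in> set (seq i h) \<longleftrightarrow>
   (\<exists>k<length h. owner (take k h) = Some i \<and> info (take k h) = X \<and> h ! k = y)"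
  by (auto simp: seq_def)

lemma reaches_iff_seq: "reaches i p h \<longleftrightarrow> (\<forall>(X, y)\<in>set (seq i h). p X = y)"
proof
  assume "\<forall>(X, y)\<in>set (seq i h). p X = y"
  moreover have "(info (take k h), h ! k) \<in> set (seq i h)"
    if "k < length h" "owner (take k h) = Some i" for k
    using that by (auto simp: set_seq)
  ultimately show "reaches i p h" unfolding reaches_def by fastforce
qed (auto simp: reaches_def set_seq)

lemma reaches_take: "reaches i p h \<Longrightarrow> reaches i p (take m h)"
  by (auto simp: reaches_def)

lemma reachesD: "reaches i p h \<Longrightarrow> k < length h \<Longrightarrow> owner (take k h) = Some i \<Longrightarrow>
   p (info (take k h)) = h ! k"
  by (auto simp: reaches_def)

lemma reaches_take_nth: "reaches i p (take m h) \<Longrightarrow> k < m \<Longrightarrow> m \<le> length h \<Longrightarrow>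
  owner (take k h) = Some i \<Longrightarrow> p (info (take k h)) = h ! k"
  using reachesD[of i p "take m h" k] by simp

lemma prefix_seq: "prefix g h \<Longrightarrow> prefix (seq i g) (seq i h)"
proof -
  assume "prefix g h"
  then obtain r where r: "h = g @ r" by (auto simp: prefix_def)
  have "prefix (seq i g) (seq i (g @ r))"
  proof (induction r rule: rev_induct)
    case (snoc x xs) then show ?case by (metis append.assoc seq_snoc prefix_append)
  qed simp
  then show ?thesis using r by simp
qed

lemma length_seq_take_less:
  assumes "k1 < k2" "k2 \<le> length h" "owner (take k1 h) = Some i"
  shows "length (seq i (take k1 h)) < length (seq i (take k2 h))"
proof -
  have "seq i (take (Suc k1) h) = seq i (take k1 h) @ [(info (take k1 h), h ! k1)]"
    using assms by (simp add: take_Suc_conv_app_nth seq_snoc)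
  moreover have "prefix (seq i (take (Suc k1) h)) (seq i (take k2 h))"
    using take_is_prefix[of "Suc k1" "take k2 h"] assms(1) by (intro prefix_seq) (simp add: min_def)
  ultimately show ?thesis using prefix_length_le by fastforce
qed

lemma owner_take_inj:
  assumes "h \<in> H" "k1 < length h" "k2 < length h"
    and "owner (take k1 h) = Some i" "owner (take k2 h) = Some i" "info (take k1 h) = info (take k2 h)"
  shows "k1 = k2"
proof (rule ccontr)
  assume "k1 \<noteq> k2"
  moreover have "seq i (take k1 h) = seq i (take k2 h)"
    using assms take_in_D[OF assms(1)] perfect_recall[of "take k1 h" "take k2 h" i] by blast
  ultimately show False
    using length_seq_take_less[of k1 k2 h i] length_seq_take_less[of k2 k1 h i] assms
    by (cases "k1 < k2") auto
qed

lemma PiI_iff_reaches: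
  assumes "J \<in> Inf i" "h \<in> nodes J"
  shows "p \<in> PiI i J \<longleftrightarrow> p \<in> Plans i \<and> reaches i p h"
proof -
  have "reaches i p h" if "h' \<in> nodes J" "reaches i p h'" for h'
    using seq_eq_nodes[OF assms(1,2) that(1)] that(2) by (simp add: reaches_iff_seq)
  then show ?thesis using assms(2) unfolding PiI_def by blast
qed

lemma PiS_Pair_iff [simp]: "p \<in> PiS i (J, a) \<longleftrightarrow> p \<in> PiI i J \<and> p J = a"
  by (simp add: PiS_def)

lemma PiS_reachesD:
  "p \<in> PiS i (K, b) \<Longrightarrow> K \<in> Inf i \<Longrightarrow> k \<in> nodes K \<Longrightarrow> p \<in> Plans i \<and> reaches i p k \<and> p K = b"
  using PiI_iff_reaches[of K i k p] by simp

lemma reaches_take_PiS: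
  assumes "h \<in> H" "m1 < m" "m \<le> length h" "take m1 h \<in> nodes I" "I \<in> Inf i"
    and "p \<in> Plans i" "reaches i p (take m h)"
  shows "p \<in> PiS i (I, h ! m1)"
proof -
  have "owner (take m1 h) = Some i" "info (take m1 h) = I" using nodes_InfD[OF assms(5,4)] by auto
  then have "p I = h ! m1" using reaches_take_nth[OF assms(7,2,3)] by simp
  moreover have "reaches i p (take m1 h)" using reaches_take[OF assms(7), of m1] assms(2) by simp
  ultimately show ?thesis using PiI_iff_reaches[OF assms(5,4)] assms(6) by simp
qed

section \<open>Infosets immediately below an action\<close>

lemma seq_eq_snoc_if_not_owned:
  assumes "prefix (h @ [x]) k" "owner h = Some i"
    and "\<forall>n. length h < n \<and> n < length k \<longrightarrow> owner (take n k) \<noteq> Some i"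
  shows "seq i k = seq i h @ [(info h, x)]"
proof -
  let ?n = "Suc (length h)"
  let ?f = "\<lambda>n. if owner (take n k) = Some i then [(info (take n k), k ! n)] else []"
  have le: "?n \<le> length k" and tk: "take ?n k = h @ [x]" using prefix_snoc_takeD[OF assms(1)] by auto
  have "[0..<length k] = [0..<?n] @ [?n..<length k]"
    using le by (metis le_add_diff_inverse upt_add_eq_append zero_le)
  moreover have "concat (map ?f [?n..<length k]) = []" using assms(3) by auto
  ultimately have "seq i k = concat (map ?f [0..<?n])" by (simp add: seq_def)
  also have "\<dots> = seq i (take ?n k)" using le by (simp add: seq_take)
  finally show ?thesis using tk assms(2) by (simp add: seq_snoc)
qed

lemma C_node_seq:
  assumes J: "J \<in> Inf i" and K: "K \<in> C i J x" and k: "k \<in> nodes K"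
  shows "\<exists>h\<in>nodes J. prefix (h @ [x]) k \<and> seq i k = seq i h @ [(J, x)]"
proof -
  have KI: "K \<in> Inf i" using K by (simp add: C_def)
  obtain h0 k0 where h0: "h0 \<in> nodes J" and k0: "k0 \<in> nodes K" and pre: "prefix (h0 @ [x]) k0"
    and no: "\<forall>n. length h0 < n \<and> n < length k0 \<longrightarrow> owner (take n k0) \<noteq> Some i"
    using K by (auto simp: C_def)
  have "seq i k = seq i h0 @ [(J, x)]"
    using seq_eq_snoc_if_not_owned[OF pre _ no] nodes_InfD[OF J h0] seq_eq_nodes[OF KI k k0] by simp
  then have "(J, x) \<in> set (seq i k)" by simp
  then obtain m where m: "m < length k" "owner (take m k) = Some i" "info (take m k) = J" "k ! m = x"
    unfolding set_seq by blast
  have hm: "take m k \<in> nodes J" using take_in_nodes[OF nodes_InfD(1)[OF KI k] m(1-3)] by simp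
  have "prefix (take m k @ [x]) k" using take_is_prefix[of "Suc m" k] m by (simp add: take_Suc_conv_app_nth)
  moreover have "seq i k = seq i (take m k) @ [(J, x)]"
    using \<open>seq i k = seq i h0 @ [(J, x)]\<close> seq_eq_nodes[OF J hm h0] by simp
  ultimately show ?thesis using hm by blast
qed

lemma C_node_longer:
  "J \<in> Inf i \<Longrightarrow> K \<in> C i J x \<Longrightarrow> k \<in> nodes K \<Longrightarrow> \<exists>h\<in>nodes J. length h < length k"
  by (metis C_node_seq prefix_snoc_takeD)

lemma C_Inf: "K \<in> C i J x \<Longrightarrow> K \<in> Inf i"
  by (simp add: C_def)

lemma C_first_owned_node:
  assumes J: "J \<in> Inf i" and h: "h \<in> nodes J" and pre: "prefix (h @ [x]) z" and z: "z \<in> H"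
    and k: "length h < k" "k < length z" "owner (take k z) = Some i"
  shows "\<exists>K\<in>C i J x. \<exists>k\<in>nodes K. prefix k z"
proof -
  let ?P = "\<lambda>m. length h < m \<and> m < length z \<and> owner (take m z) = Some i"
  obtain m where m: "?P m" and least: "\<forall>n<m. \<not> ?P n" using k exists_least_iff[of ?P] by blast
  define K where "K = info (take m z)"
  have mK: "take m z \<in> nodes K" "K \<in> Inf i" using take_in_nodes[OF z] m by (auto simp: K_def)
  have "prefix (h @ [x]) (take m z)"
    using take_is_prefix[of "Suc (length h)" "take m z"] prefix_snoc_takeD[OF pre] m by (simp add: min_def)
  moreover have "\<forall>n. length h < n \<and> n < length (take m z) \<longrightarrow> owner (take n (take m z)) \<noteq> Some i"
    using least by auto
  ultimately have "K \<in> C i J x" unfolding C_def using mK h by blast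
  then show ?thesis using mK take_is_prefix by blast
qed

lemma ZIa_subset_ZI: "ZIa J a \<subseteq> ZI J"
  by (auto simp: ZIa_def ZI_def prefix_def)

lemma ZI_subset_ZIa_C: "J \<in> Inf i \<Longrightarrow> K \<in> C i J x \<Longrightarrow> ZI K \<subseteq> ZIa J x"
proof
  fix z assume J: "J \<in> Inf i" and K: "K \<in> C i J x" and z: "z \<in> ZI K"
  then obtain k where k: "k \<in> nodes K" "prefix k z" "z \<in> Z" by (auto simp: ZI_def)
  then obtain h where "h \<in> nodes J" "prefix (h @ [x]) k" using C_node_seq[OF J K] by blast
  then show "z \<in> ZIa J x" using k prefix_order.order_trans by (auto simp: ZIa_def)
qed

lemma eq_if_prefix_seq_eq:
  assumes "owner k1 = Some i" "prefix k1 k2" "seq i k1 = seq i k2"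
  shows "k1 = k2"
proof (rule ccontr)
  assume "k1 \<noteq> k2"
  then have "length k1 < length k2" using assms(2) prefix_length_less by (auto simp: strict_prefix_def)
  moreover have "take (length k1) k2 = k1" using assms(2) by (auto simp: prefix_def)
  ultimately have "length (seq i k1) < length (seq i (take (length k2) k2))"
    using length_seq_take_less[of "length k1" "length k2" k2 i] assms(1) by simp
  then show False using assms(3) by simp
qed

lemma ZI_C_disjoint:
  assumes J: "J \<in> Inf i" and K1: "K1 \<in> C i J x" and K2: "K2 \<in> C i J x" and "K1 \<noteq> K2"
  shows "ZI K1 \<inter> ZI K2 = {}"
proof (rule ccontr)
  assume "ZI K1 \<inter> ZI K2 \<noteq> {}"
  then obtain z k1 k2 where k1: "k1 \<in> nodes K1" "prefix k1 z" and k2: "k2 \<in> nodes K2" "prefix k2 z"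
    by (auto simp: ZI_def)
  obtain h1 where h1: "h1 \<in> nodes J" "seq i k1 = seq i h1 @ [(J, x)]" using C_node_seq[OF J K1 k1(1)] by blast
  obtain h2 where h2: "h2 \<in> nodes J" "seq i k2 = seq i h2 @ [(J, x)]" using C_node_seq[OF J K2 k2(1)] by blast
  have eq: "seq i k1 = seq i k2" using h1 h2 seq_eq_nodes[OF J h1(1) h2(1)] by simp
  have o1: "owner k1 = Some i" "info k1 = K1" using nodes_InfD[OF C_Inf[OF K1] k1(1)] by auto
  have o2: "owner k2 = Some i" "info k2 = K2" using nodes_InfD[OF C_Inf[OF K2] k2(1)] by auto
  have "prefix k1 k2 \<or> prefix k2 k1" using k1(2) k2(2) prefix_same_cases by blast
  then have "k1 = k2" using eq_if_prefix_seq_eq o1 o2 eq by metis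
  then show False using o1 o2 \<open>K1 \<noteq> K2\<close> by simp
qed

lemma reaches_ZI_imp_ZIa:
  assumes J: "J \<in> Inf i" and z: "z \<in> ZI J" and r: "reaches i p z"
  shows "z \<in> ZIa J (p J)"
proof -
  obtain h where h: "h \<in> nodes J" "prefix h z" "z \<in> Z" using z by (auto simp: ZI_def)
  have "h \<noteq> z" using nodes_InfD(2)[OF J h(1)] h(3) by (auto simp: D_def)
  then have l: "length h < length z" using h(2) prefix_length_less by (auto simp: strict_prefix_def)
  have t: "take (length h) z = h" using h(2) by (auto simp: prefix_def)
  have "p J = z ! length h" using reachesD[OF r l] t nodes_InfD[OF J h(1)] by simp
  then have "prefix (h @ [p J]) z"
    using take_is_prefix[of "Suc (length h)" z] l t by (simp add: take_Suc_conv_app_nth)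
  then show ?thesis using h by (auto simp: ZIa_def)
qed

lemma reaches_immediate:
  assumes J: "J \<in> Inf i" and p: "p \<in> PiI i J" and z: "z \<in> ZIa J (p J)"
    and nz: "z \<notin> (\<Union>K\<in>C i J (p J). ZI K)"
  shows "reaches i p z"
proof -
  obtain h where h: "h \<in> nodes J" "prefix (h @ [p J]) z" "z \<in> Z" using z by (auto simp: ZIa_def)
  have zH: "z \<in> H" using h(3) by (simp add: Z_def)
  have rh: "reaches i p h" using PiI_iff_reaches[OF J h(1)] p by simp
  have ph: "length h < length z" "take (length h) z = h" "z ! length h = p J"
    using prefix_snoc_takeD[OF h(2)] by auto
  have below: "owner (take k z) \<noteq> Some i" if "length h < k" "k < length z" for k
    using C_first_owned_node[OF J h(1,2) zH that] nz h(3) by (auto simp: ZI_def)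
  show ?thesis unfolding reaches_def
  proof (intro allI impI)
    fix k assume k: "k < length z" "owner (take k z) = Some i"
    then consider "k < length h" | "k = length h" using below by fastforce
    then show "p (info (take k z)) = z ! k"
    proof cases
      case 1
      then show ?thesis using reachesD[OF rh, of k] k(2) ph(2) by (metis min.absorb1 nat_less_le nth_take take_take)
    qed (use ph nodes_InfD[OF J h(1)] in simp)
  qed
qed

lemma PiI_C: assumes J: "J \<in> Inf i" and p: "p \<in> PiI i J" and K: "K \<in> C i J (p J)"
  shows "p \<in> PiI i K"
proof -
  obtain k where k: "k \<in> nodes K" using ex_node[OF C_Inf[OF K]] by blast
  obtain h where h: "h \<in> nodes J" "seq i k = seq i h @ [(J, p J)]" using C_node_seq[OF J K k] by blast
  have "p \<in> Plans i" "reaches i p h" using PiI_iff_reaches[OF J h(1)] p by auto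
  then show ?thesis using PiI_iff_reaches[OF C_Inf[OF K] k] h(2) by (auto simp: reaches_iff_seq)
qed

section \<open>Trigger sequences\<close>

lemma SigcI:
  assumes J: "J \<in> Inf i" and h: "h \<in> nodes J" and m: "m < length h" "take m h \<in> nodes K"
    and K: "K \<in> Inf i" and b: "b \<in> Act K" "b \<noteq> h ! m"
  shows "(K, b) \<in> Sigc i J"
proof -
  have hH: "h \<in> H" using nodes_InfD[OF J h] by simp
  have om: "owner (take m h) = Some i" "info (take m h) = K" using nodes_InfD[OF K m(2)] by auto
  have "K \<noteq> J"
  proof
    assume "K = J"
    then have "seq i (take m h) = seq i (take (length h) h)" using seq_eq_nodes[OF J _ h] m(2) by simp
    then show False using length_seq_take_less[OF m(1) _ om(1)] by simp
  qed
  moreover have "preceq K J" unfolding preceq_def using m(2) h take_is_prefix by blast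
  moreover have "h' ! k \<noteq> b" if h': "h' \<in> nodes J" and k: "k < length h'" "take k h' \<in> nodes K" for h' k
  proof -
    have "(K, h' ! k) \<in> set (seq i h')" unfolding set_seq using k nodes_InfD[OF K k(2)] by auto
    then have "(K, h' ! k) \<in> set (seq i h)" using seq_eq_nodes[OF J h h'] by simp
    then obtain k' where k': "k' < length h" "owner (take k' h) = Some i" "info (take k' h) = K" "h ! k' = h' ! k"
      unfolding set_seq by blast
    have "k' = m" using owner_take_inj[OF hH k'(1) m(1) k'(2) om(1)] k'(3) om(2) by simp
    then show ?thesis using k'(4) b(2) by simp
  qed
  ultimately show ?thesis using K b(1) by (auto simp: Sigc_def)
qed

lemma SigcD:
  assumes J: "J \<in> Inf i" and s: "(K, b) \<in> Sigc i J" and h: "h \<in> nodes J"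
  shows "\<exists>m<length h. take m h \<in> nodes K \<and> b \<noteq> h ! m \<and> K \<in> Inf i"
proof -
  have KI: "K \<in> Inf i" and pq: "preceq K J" and ne: "K \<noteq> J"
    and cond: "\<forall>h\<in>nodes J. \<forall>k<length h. take k h \<in> nodes K \<longrightarrow> h ! k \<noteq> b"
    using s by (auto simp: Sigc_def)
  obtain k h' where k: "k \<in> nodes K" and h': "h' \<in> nodes J" and pre: "prefix k h'"
    using pq by (auto simp: preceq_def)
  have "k \<noteq> h'" using nodes_InfD(4)[OF KI k] nodes_InfD(4)[OF J h'] ne by auto
  then have "length k < length h'" using pre prefix_length_less by (auto simp: strict_prefix_def)
  moreover have "take (length k) h' = k" using pre by (auto simp: prefix_def)
  ultimately have "(K, h' ! length k) \<in> set (seq i h)"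
    unfolding seq_eq_nodes[OF J h h'] set_seq using nodes_InfD[OF KI k] by auto
  then obtain m where m: "m < length h" "owner (take m h) = Some i" "info (take m h) = K"
    unfolding set_seq by blast
  have "take m h \<in> nodes K" using take_in_nodes[OF nodes_InfD(1)[OF J h] m] by simp
  then show ?thesis using cond h m(1) KI by blast
qed

lemma PiI_Int_PiS_Sigc:
  assumes J: "J \<in> Inf i" and s: "\<sigma> \<in> Sigc i J"
  shows "PiI i J \<inter> PiS i \<sigma> = {}"
proof -
  obtain K b where \<sigma>: "\<sigma> = (K, b)" by fastforce
  obtain h where h: "h \<in> nodes J" using ex_node[OF J] by blast
  obtain m where m: "m < length h" "take m h \<in> nodes K" "b \<noteq> h ! m" "K \<in> Inf i"
    using SigcD[OF J s[unfolded \<sigma>] h] by blast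
  have "p \<in> PiS i (K, h ! m)" if "p \<in> PiI i J" for p
    using reaches_take_PiS[OF nodes_InfD(1)[OF J h] m(1) _ m(2,4)] PiI_iff_reaches[OF J h] that by simp
  then show ?thesis using \<sigma> m(3) by auto
qed

lemma Sigc_unique:
  assumes J: "J \<in> Inf i" and s1: "\<sigma>1 \<in> Sigc i J" and s2: "\<sigma>2 \<in> Sigc i J"
    and p: "p \<in> PiS i \<sigma>1" "p \<in> PiS i \<sigma>2"
  shows "\<sigma>1 = \<sigma>2"
proof -
  obtain K1 b1 K2 b2 where \<sigma>: "\<sigma>1 = (K1, b1)" "\<sigma>2 = (K2, b2)" by fastforce
  obtain h where h: "h \<in> nodes J" using ex_node[OF J] by blast
  have hH: "h \<in> H" using nodes_InfD[OF J h] by simp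
  obtain m1 where m1: "m1 < length h" "take m1 h \<in> nodes K1" "b1 \<noteq> h ! m1" "K1 \<in> Inf i"
    using SigcD[OF J s1[unfolded \<sigma>(1)] h] by blast
  obtain m2 where m2: "m2 < length h" "take m2 h \<in> nodes K2" "b2 \<noteq> h ! m2" "K2 \<in> Inf i"
    using SigcD[OF J s2[unfolded \<sigma>(2)] h] by blast
  have r1: "p \<in> Plans i" "reaches i p (take m1 h)" "p K1 = b1" using PiS_reachesD[OF p(1)[unfolded \<sigma>(1)] m1(4,2)] by auto
  have r2: "reaches i p (take m2 h)" "p K2 = b2" using PiS_reachesD[OF p(2)[unfolded \<sigma>(2)] m2(4,2)] by auto
  have "\<not> m1 < m2" using reaches_take_PiS[OF hH _ _ m1(2,4) r1(1) r2(1)] m2(1) r1(3) m1(3) by fastforce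
  moreover have "\<not> m2 < m1" using reaches_take_PiS[OF hH _ _ m2(2,4) r1(1,2)] m1(1) r2(2) m2(3) by fastforce
  ultimately have "K1 = K2" using nodes_InfD(4)[OF m1(4,2)] nodes_InfD(4)[OF m2(4,2)] by simp
  then show ?thesis using \<sigma> r1(3) r2(2) by simp
qed

lemma Sigc_exists:
  assumes J: "J \<in> Inf i" and p: "p \<in> Plans i" and np: "p \<notin> PiI i J"
  shows "\<exists>\<sigma>\<in>Sigc i J. p \<in> PiS i \<sigma>"
proof -
  obtain h where h: "h \<in> nodes J" using ex_node[OF J] by blast
  have hH: "h \<in> H" using nodes_InfD[OF J h] by simp
  let ?P = "\<lambda>m. m < length h \<and> owner (take m h) = Some i \<and> p (info (take m h)) \<noteq> h ! m"
  have "\<exists>m. ?P m" using np PiI_iff_reaches[OF J h] p unfolding reaches_def by blast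
  then obtain m where m: "?P m" and least: "\<forall>n<m. \<not> ?P n" using exists_least_iff[of ?P] by blast
  define K where "K = info (take m h)"
  have mK: "take m h \<in> nodes K" "K \<in> Inf i" using take_in_nodes[OF hH] m by (auto simp: K_def)
  have "reaches i p (take m h)" using least m by (auto simp: reaches_def)
  then have "p \<in> PiS i (K, p K)" using PiI_iff_reaches[OF mK(2,1)] p by simp
  moreover have "(K, p K) \<in> Sigc i J" using SigcI[OF J h _ mK(1,2)] Plans_Act[OF p mK(2)] m by (simp add: K_def)
  ultimately show ?thesis by blast
qed

lemma sigma_of_eq: "J \<in> Inf i \<Longrightarrow> \<sigma> \<in> Sigc i J \<Longrightarrow> p \<in> PiS i \<sigma> \<Longrightarrow> sigma_of i J p = \<sigma>"
  unfolding sigma_of_def by (rule the_equality) (auto intro: Sigc_unique)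

lemma PiI_Sigc_partition:
  assumes J: "J \<in> Inf i" and p: "p \<in> Plans i"
  shows "(if p \<in> PiI i J then 1 else 0) + (\<Sum>\<sigma>\<in>Sigc i J. if p \<in> PiS i \<sigma> then 1 else 0) = (1::real)"
proof (cases "p \<in> PiI i J")
  case True
  have "p \<notin> PiS i \<sigma>" if "\<sigma> \<in> Sigc i J" for \<sigma>
    using PiI_Int_PiS_Sigc[OF J that] True by blast
  then show ?thesis using True by simp
next
  case False
  then obtain \<sigma>0 where s0: "\<sigma>0 \<in> Sigc i J" "p \<in> PiS i \<sigma>0" using Sigc_exists[OF J p] by blast
  have "p \<in> PiS i \<sigma> \<longleftrightarrow> \<sigma> = \<sigma>0" if "\<sigma> \<in> Sigc i J" for \<sigma>
    using Sigc_unique[OF J that s0(1) _ s0(2)] s0(2) by blast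
  then have "(\<Sum>\<sigma>\<in>Sigc i J. if p \<in> PiS i \<sigma> then 1 else 0) = (\<Sum>\<sigma>\<in>Sigc i J. if \<sigma> = \<sigma>0 then 1 else (0::real))"
    by (intro sum.cong) simp_all
  then show ?thesis using False s0(1) finite_Sigc by simp
qed

lemma subset_or_disjoint_PiS:
  "X \<subseteq> PiS i (I, b) \<Longrightarrow> X \<subseteq> PiS i (I, a) \<or> X \<inter> PiS i (I, a) = {}"
  by (cases "a = b") auto

lemma PiI_subset_or_disjoint_PiS:
  assumes I: "I \<in> Inf i" and J: "J \<in> Inf i" and h: "h \<in> nodes J"
    and m: "m < length h" "take m h \<in> nodes I"
  shows "PiI i J \<subseteq> PiS i (I, a) \<or> PiI i J \<inter> PiS i (I, a) = {}"
proof (rule subset_or_disjoint_PiS)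
  show "PiI i J \<subseteq> PiS i (I, h ! m)"
    using reaches_take_PiS[OF nodes_InfD(1)[OF J h] m(1) _ m(2) I] PiI_iff_reaches[OF J h] by auto
qed

lemma Sigc_subset_or_disjoint_PiS:
  assumes I: "I \<in> Inf i" and J: "J \<in> Inf i" and h: "h \<in> nodes J"
    and m: "m < length h" "take m h \<in> nodes I" and s: "\<sigma> \<in> Sigc i J"
  shows "PiS i \<sigma> \<subseteq> PiS i (I, a) \<or> PiS i \<sigma> \<inter> PiS i (I, a) = {}"
proof -
  obtain K b where \<sigma>: "\<sigma> = (K, b)" by fastforce
  have hH: "h \<in> H" using nodes_InfD[OF J h] by simp
  obtain m' where m': "m' < length h" "take m' h \<in> nodes K" "b \<noteq> h ! m'" "K \<in> Inf i"
    using SigcD[OF J s[unfolded \<sigma>] h] by blast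
  consider "m' < m" | "m < m'" | "m = m'" by linarith
  then show ?thesis
  proof cases
    case 1
    have "p \<notin> PiS i (I, a)" if "p \<in> PiS i \<sigma>" for p
      using reaches_take_PiS[OF hH 1 _ m'(2,4)] PiS_reachesD[of p i I a] m I that \<sigma> m'(3) by fastforce
    then show ?thesis by blast
  next
    case 2
    have "PiS i \<sigma> \<subseteq> PiS i (I, h ! m)"
      using reaches_take_PiS[OF hH 2 _ m(2) I] PiS_reachesD[OF _ m'(4,2)] m'(1) \<sigma> by fastforce
    then show ?thesis by (rule subset_or_disjoint_PiS)
  next
    case 3
    then have "K = I" using nodes_InfD(4)[OF m'(4,2)] nodes_InfD(4)[OF I m(2)] by simp
    then show ?thesis using \<sigma> subset_or_disjoint_PiS[of "PiS i \<sigma>"] by auto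
  qed
qed

section \<open>Values\<close>

definition height_le :: "nat \<Rightarrow> 'i \<Rightarrow> bool" where
  "height_le n J \<longleftrightarrow> (\<forall>h\<in>nodes J. card H \<le> length h + n)"

lemma height_le_card_H: "height_le (card H) J"
  by (simp add: height_le_def)

lemma not_height_le_0: "J \<in> Inf i \<Longrightarrow> \<not> height_le 0 J"
  using ex_node nodes_InfD(1) length_lt_card_H by (fastforce simp: height_le_def)

lemma height_le_C:
  assumes "height_le (Suc n) J" "J \<in> Inf i" "K \<in> C i J x"
  shows "height_le n K"
  unfolding height_le_def
proof
  fix k assume "k \<in> nodes K"
  then obtain h where "h \<in> nodes J" "length h < length k" using C_node_longer[OF assms(2,3)] by blast
  then show "card H \<le> length k + n" using assms(1) unfolding height_le_def by fastforce
qed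

lemma Vn_eq_Vn: "J \<in> Inf i \<Longrightarrow> height_le n J \<Longrightarrow> n \<le> m \<Longrightarrow> Vn m i \<pi> J p = Vn n i \<pi> J p"
proof (induction n arbitrary: J m)
  case 0
  then show ?case using not_height_le_0 by blast
next
  case (Suc n)
  then obtain m' where m: "m = Suc m'" "n \<le> m'" by (cases m) auto
  have "Vn m' i \<pi> K p = Vn n i \<pi> K p" if "K \<in> C i J (p J)" for K
    using Suc.IH[OF C_Inf[OF that] height_le_C[OF Suc.prems(2,1) that] m(2)] .
  then show ?case using m by simp
qed

lemma V_rec: "J \<in> Inf i \<Longrightarrow> V i \<pi> J p = imm_u i \<pi> J (p J) + (\<Sum>K\<in>C i J (p J). V i \<pi> K p)"
proof -
  assume J: "J \<in> Inf i"
  have "card H \<noteq> 0" using finite_H root by auto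
  then obtain N where N: "card H = Suc N" using not0_implies_Suc by blast
  then have hJ: "height_le (Suc N) J" using height_le_card_H by metis
  have "V i \<pi> K p = Vn N i \<pi> K p" if K: "K \<in> C i J (p J)" for K
    using Vn_eq_Vn[OF C_Inf[OF K] height_le_C[OF hJ J K], of "Suc N"] N by (simp add: V_def)
  then show ?thesis unfolding V_def[of i \<pi> J] N by simp
qed

lemma V_diff_rec:
  assumes "J \<in> Inf i"
  shows "V i \<pi> J p - V i \<pi> J (\<pi> i) =
    (local_u i \<pi> J (p J) - local_u i \<pi> J (\<pi> i J)) + (\<Sum>K\<in>C i J (p J). V i \<pi> K p - V i \<pi> K (\<pi> i))"
  using V_rec[OF assms, of \<pi> p] V_rec[OF assms, of \<pi> "\<pi> i"] by (simp add: local_u_def sum_subtractf)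

definition reach_value :: "'p \<Rightarrow> ('p \<Rightarrow> 'i \<Rightarrow> 'a) \<Rightarrow> 'i \<Rightarrow> ('i \<Rightarrow> 'a) \<Rightarrow> real" where
  "reach_value i \<pi> J p =
     (\<Sum>z\<in>ZI J. if reaches i p z then (if others_reach i \<pi> z then 1 else 0) * pcz z * u i z else 0)"

lemma reach_value_ZIa:
  assumes J: "J \<in> Inf i"
  shows "reach_value i \<pi> J p =
    (\<Sum>z\<in>ZIa J (p J). if reaches i p z then (if others_reach i \<pi> z then 1 else 0) * pcz z * u i z else 0)"
  unfolding reach_value_def
  by (rule sum.mono_neutral_right[OF finite_ZI ZIa_subset_ZI]) (use reaches_ZI_imp_ZIa[OF J] in auto)

lemma V_eq_reach_value:
  assumes "J \<in> Inf i" "p \<in> PiI i J"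
  shows "V i \<pi> J p = reach_value i \<pi> J p"
proof -
  have "V i \<pi> J p = reach_value i \<pi> J p" if "height_le n J" "J \<in> Inf i" "p \<in> PiI i J" for n J
    using that
  proof (induction n arbitrary: J)
    case 0
    then show ?case using not_height_le_0 by blast
  next
    case (Suc n)
    note J = Suc.prems(2) and p = Suc.prems(3)
    let ?g = "\<lambda>z. if reaches i p z then (if others_reach i \<pi> z then 1 else 0) * pcz z * u i z else 0"
    let ?A = "ZIa J (p J)" and ?U = "\<Union>K\<in>C i J (p J). ZI K"
    have "?U \<subseteq> ?A" using ZI_subset_ZIa_C[OF J] by blast
    then have "reach_value i \<pi> J p = sum ?g (?A - ?U) + sum ?g ?U"
      using reach_value_ZIa[OF J] sum.subset_diff[OF _ finite_ZIa] by simp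
    also have "sum ?g (?A - ?U) = imm_u i \<pi> J (p J)"
      unfolding imm_u_def using reaches_immediate[OF J p] by (intro sum.cong) auto
    also have "sum ?g ?U = (\<Sum>K\<in>C i J (p J). sum ?g (ZI K))"
      using ZI_C_disjoint[OF J] by (intro sum.UNION_disjoint) (auto simp: finite_C finite_ZI)
    also have "\<dots> = (\<Sum>K\<in>C i J (p J). V i \<pi> K p)"
      using Suc.IH[OF height_le_C[OF Suc.prems(1) J] C_Inf PiI_C[OF J p]]
      by (intro sum.cong) (simp_all add: reach_value_def)
    finally show ?case using V_rec[OF J] by simp
  qed
  then show ?thesis using assms height_le_card_H by blast
qed

lemma sum_PiZ_Delta:
  assumes "\<mu>h \<in> Delta (PiI i I)"
  shows "(\<Sum>p\<in>PiZ i z. \<mu>h p) = (\<Sum>p\<in>PiI i I. if reaches i p z then \<mu>h p else 0)"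
proof -
  have "(\<Sum>p\<in>PiZ i z. \<mu>h p) = (\<Sum>p\<in>Plans i. if reaches i p z then \<mu>h p else 0)"
    unfolding PiZ_def by (rule sum.inter_filter[OF finite_Plans])
  also have "\<dots> = (\<Sum>p\<in>PiI i I. if reaches i p z then \<mu>h p else 0)"
    using assms by (intro sum.mono_neutral_right finite_Plans) (auto simp: PiI_def Delta_def)
  finally show ?thesis .
qed

lemma sum_ZIa_reached:
  assumes i: "i \<in> Pl" and I: "I \<in> Inf i" and \<rho>: "\<rho> \<in> Joint"
  shows "(\<Sum>z\<in>ZIa I a. (if \<forall>j\<in>Pl. reaches j (\<rho> j) z then 1 else 0) * pcz z * u i z) =
         (if \<rho> i \<in> PiS i (I, a) then 1 else 0) * reach_value i \<rho> I (\<rho> i)"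
proof -
  have \<rho>i: "\<rho> i \<in> Plans i" using \<rho> i by (auto simp: Joint_def)
  have all: "(\<forall>j\<in>Pl. reaches j (\<rho> j) z) \<longleftrightarrow> reaches i (\<rho> i) z \<and> others_reach i \<rho> z" for z
    using i by (auto simp: others_reach_def)
  have PiS: "\<rho> i \<in> PiS i (I, a)" if z: "z \<in> ZIa I a" and r: "reaches i (\<rho> i) z" for z
  proof -
    obtain h where h: "h \<in> nodes I" "prefix (h @ [a]) z" using z by (auto simp: ZIa_def)
    have z: "length h < length z" "take (length h) z = h" "z ! length h = a"
      using prefix_snoc_takeD[OF h(2)] by auto
    have "reaches i (\<rho> i) h" using reaches_take[OF r, of "length h"] z by simp
    moreover have "\<rho> i I = a" using reachesD[OF r z(1)] z nodes_InfD[OF I h(1)] by simp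
    ultimately show ?thesis using PiI_iff_reaches[OF I h(1)] \<rho>i by simp
  qed
  show ?thesis
  proof (cases "\<rho> i \<in> PiS i (I, a)")
    case True
    then have "\<rho> i I = a" by simp
    then show ?thesis using True reach_value_ZIa[OF I, of \<rho> "\<rho> i"] by (simp add: all) (intro sum.cong; simp)
  next
    case False
    have "(\<Sum>z\<in>ZIa I a. (if \<forall>j\<in>Pl. reaches j (\<rho> j) z then 1 else 0) * pcz z * u i z) = 0"
      by (intro sum.neutral ballI) (use PiS all False in auto)
    then show ?thesis using False by auto
  qed
qed

end

section \<open>Regret decomposition along a run\<close>

text \<open>A single run of ICFR: \<pi>s t is the joint plan of round t, and aint J t and aext \<sigma> J t are
  the actions output at round t by the regret minimizers of infoset J; int_util and ext_util below are
  the utility vectors they observe.\<close>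

locale icfr_run = wf_efg Pl H owner info pc u
  for Pl :: "'p set" and H :: "'a list set" and owner :: "'a list \<Rightarrow> 'p option"
    and info :: "'a list \<Rightarrow> 'i" and pc :: "'a list \<Rightarrow> 'a \<Rightarrow> real" and u :: "'p \<Rightarrow> 'a list \<Rightarrow> real" +
  fixes \<pi>s :: "nat \<Rightarrow> 'p \<Rightarrow> 'i \<Rightarrow> 'a"
    and aint :: "'i \<Rightarrow> nat \<Rightarrow> 'a"
    and aext :: "'i \<times> 'a \<Rightarrow> 'i \<Rightarrow> nat \<Rightarrow> 'a"
  assumes joint: "\<pi>s t \<in> Joint"
    and aint_Act: "i \<in> Pl \<Longrightarrow> J \<in> Inf i \<Longrightarrow> aint J t \<in> Act J"
    and icfr: "i \<in> Pl \<Longrightarrow> J \<in> Inf i \<Longrightarrow>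
      \<pi>s t i J = (if \<pi>s t i \<in> PiI i J then aint J t else aext (sigma_of i J (\<pi>s t i)) J t)"
begin

definition int_util :: "'p \<Rightarrow> 'i \<Rightarrow> nat \<Rightarrow> 'a \<Rightarrow> real" where
  "int_util i J t x = (if \<pi>s t i \<in> PiI i J then 1 else 0) * local_u i (\<pi>s t) J x"

definition ext_util :: "'p \<Rightarrow> 'i \<times> 'a \<Rightarrow> 'i \<Rightarrow> nat \<Rightarrow> 'a \<Rightarrow> real" where
  "ext_util i \<sigma> J t x = (if \<pi>s t i \<in> PiS i \<sigma> then 1 else 0) * local_u i (\<pi>s t) J x"

(* The extra 1 in the factor pays for the trigger infoset itself (local_deviation_at_infoset). *)
definition infoset_regret :: "'p \<Rightarrow> 'i \<Rightarrow> nat \<Rightarrow> real" where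
  "infoset_regret i J T =
     (real (card (Act J)) + 1) * max 0 (int_regret (Act J) (aint J) (int_util i J) T)
     + (\<Sum>\<sigma>\<in>Sigc i J. max 0 (ext_regret (Act J) (aext \<sigma> J) (ext_util i \<sigma> J) T))"

definition player_regret :: "'p \<Rightarrow> nat \<Rightarrow> real" where
  "player_regret i T = (\<Sum>J\<in>Inf i. infoset_regret i J T)"

lemma infoset_regret_nonneg: "0 \<le> infoset_regret i J T"
  unfolding infoset_regret_def by (intro add_nonneg_nonneg mult_nonneg_nonneg sum_nonneg) auto

lemma player_regret_nonneg: "0 \<le> player_regret i T"
  unfolding player_regret_def by (intro sum_nonneg infoset_regret_nonneg)

lemma infoset_regret_le_player_regret: "J \<in> Inf i \<Longrightarrow> infoset_regret i J T \<le> player_regret i T"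
  unfolding player_regret_def by (rule member_le_sum) (simp_all add: infoset_regret_nonneg finite_Inf)

lemma plan_in_Plans: "i \<in> Pl \<Longrightarrow> \<pi>s t i \<in> Plans i"
  using joint[of t] by (auto simp: Joint_def)

lemma local_deviation_at_infoset:
  assumes i: "i \<in> Pl" and I: "I \<in> Inf i" and a: "a \<in> Act I" and y: "y \<in> Act I"
  shows "(\<Sum>t\<in>{1..T}. (if \<pi>s t i \<in> PiS i (I, a) then 1 else 0) *
            (local_u i (\<pi>s t) I y - local_u i (\<pi>s t) I (\<pi>s t i I)))
         \<le> int_regret (Act I) (aint I) (int_util i I) T"
proof -
  have "(if \<pi>s t i \<in> PiS i (I, a) then 1 else 0) * (local_u i (\<pi>s t) I y - local_u i (\<pi>s t) I (\<pi>s t i I))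
      = (if aint I t = a then int_util i I t y - int_util i I t a else 0)" for t
    using icfr[OF i I, of t] by (auto simp: int_util_def)
  then show ?thesis using int_regret_ge[OF finite_Act a y, of "aint I" "int_util i I" T] by simp
qed

lemma deviation_on_PiI_le_int_regret:
  assumes i: "i \<in> Pl" and J: "J \<in> Inf i" and y: "y \<in> Act J"
  shows "(\<Sum>t\<in>{1..T}. (if \<pi>s t i \<in> PiI i J then 1 else 0) *
            (local_u i (\<pi>s t) J y - local_u i (\<pi>s t) J (\<pi>s t i J)))
         \<le> real (card (Act J)) * max 0 (int_regret (Act J) (aint J) (int_util i J) T)"
proof -
  have "(\<Sum>t\<in>{1..T}. (if \<pi>s t i \<in> PiI i J then 1 else 0) *
            (local_u i (\<pi>s t) J y - local_u i (\<pi>s t) J (\<pi>s t i J)))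
      = (\<Sum>t\<in>{1..T}. int_util i J t y - int_util i J t (aint J t))"
    using icfr[OF i J] by (intro sum.cong) (auto simp: int_util_def)
  also have "\<dots> \<le> real (card (Act J)) * max 0 (int_regret (Act J) (aint J) (int_util i J) T)"
    using fixed_regret_le_int_regret[OF finite_Act y aint_Act[OF i J]] .
  finally show ?thesis .
qed

lemma deviation_on_PiS_le_ext_regret:
  assumes i: "i \<in> Pl" and J: "J \<in> Inf i" and \<sigma>: "\<sigma> \<in> Sigc i J" and y: "y \<in> Act J"
  shows "(\<Sum>t\<in>{1..T}. (if \<pi>s t i \<in> PiS i \<sigma> then 1 else 0) *
            (local_u i (\<pi>s t) J y - local_u i (\<pi>s t) J (\<pi>s t i J)))
         \<le> ext_regret (Act J) (aext \<sigma> J) (ext_util i \<sigma> J) T"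
proof -
  have "(if \<pi>s t i \<in> PiS i \<sigma> then 1 else 0) * (local_u i (\<pi>s t) J y - local_u i (\<pi>s t) J (\<pi>s t i J))
      = ext_util i \<sigma> J t y - ext_util i \<sigma> J t (aext \<sigma> J t)" for t
  proof (cases "\<pi>s t i \<in> PiS i \<sigma>")
    case True
    then have "\<pi>s t i \<notin> PiI i J" using PiI_Int_PiS_Sigc[OF J \<sigma>] by blast
    then show ?thesis using True icfr[OF i J, of t] sigma_of_eq[OF J \<sigma> True] by (simp add: ext_util_def)
  qed (simp add: ext_util_def)
  then show ?thesis using ext_regret_ge[OF finite_Act y] by simp
qed

lemma local_deviation_below_infoset:
  assumes i: "i \<in> Pl" and I: "I \<in> Inf i" and J: "J \<in> Inf i" and h: "h \<in> nodes J"
    and m: "m < length h" "take m h \<in> nodes I" and y: "y \<in> Act J"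
  shows "(\<Sum>t\<in>{1..T}. (if \<pi>s t i \<in> PiS i (I, a) then 1 else 0) *
            (local_u i (\<pi>s t) J y - local_u i (\<pi>s t) J (\<pi>s t i J)))
         \<le> real (card (Act J)) * max 0 (int_regret (Act J) (aint J) (int_util i J) T)
           + (\<Sum>\<sigma>\<in>Sigc i J. max 0 (ext_regret (Act J) (aext \<sigma> J) (ext_util i \<sigma> J) T))"
proof -
  define D where "D t = local_u i (\<pi>s t) J y - local_u i (\<pi>s t) J (\<pi>s t i J)" for t
  define ind where "ind X t = (if \<pi>s t i \<in> X then 1 else (0::real))" for X t
  let ?e = "\<lambda>t. ind (PiS i (I, a)) t * D t"
  have "ind (PiI i J) t + (\<Sum>\<sigma>\<in>Sigc i J. ind (PiS i \<sigma>) t) = 1" for t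
    using PiI_Sigc_partition[OF J plan_in_Plans[OF i]] unfolding ind_def .
  then have "?e t = (ind (PiI i J) t + (\<Sum>\<sigma>\<in>Sigc i J. ind (PiS i \<sigma>) t)) * ?e t" for t
    by simp
  then have "?e t = ind (PiI i J) t * ?e t + (\<Sum>\<sigma>\<in>Sigc i J. ind (PiS i \<sigma>) t * ?e t)" for t
    by (simp only: distrib_right sum_distrib_right)
  then have "(\<Sum>t\<in>{1..T}. ?e t)
      = (\<Sum>t\<in>{1..T}. ind (PiI i J) t * ?e t + (\<Sum>\<sigma>\<in>Sigc i J. ind (PiS i \<sigma>) t * ?e t))"
    by (intro sum.cong refl)
  then have split: "(\<Sum>t\<in>{1..T}. ?e t) = (\<Sum>t\<in>{1..T}. ind (PiI i J) t * ?e t)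
      + (\<Sum>\<sigma>\<in>Sigc i J. \<Sum>t\<in>{1..T}. ind (PiS i \<sigma>) t * ?e t)"
    by (simp only: sum.distrib sum.swap[of _ "Sigc i J"])
  have "(\<Sum>t\<in>{1..T}. ind (PiI i J) t * ?e t) \<le> max 0 (\<Sum>t\<in>{1..T}. ind (PiI i J) t * D t)"
    unfolding ind_def by (rule sum_indicator_subset_or_disjoint[OF PiI_subset_or_disjoint_PiS[OF I J h m]])
  also have "\<dots> \<le> real (card (Act J)) * max 0 (int_regret (Act J) (aint J) (int_util i J) T)"
    using deviation_on_PiI_le_int_regret[OF i J y, of T] unfolding ind_def D_def by simp
  finally have int: "(\<Sum>t\<in>{1..T}. ind (PiI i J) t * ?e t)
      \<le> real (card (Act J)) * max 0 (int_regret (Act J) (aint J) (int_util i J) T)" .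
  have "(\<Sum>t\<in>{1..T}. ind (PiS i \<sigma>) t * ?e t) \<le> max 0 (ext_regret (Act J) (aext \<sigma> J) (ext_util i \<sigma> J) T)"
    if \<sigma>: "\<sigma> \<in> Sigc i J" for \<sigma>
  proof -
    have "(\<Sum>t\<in>{1..T}. ind (PiS i \<sigma>) t * ?e t) \<le> max 0 (\<Sum>t\<in>{1..T}. ind (PiS i \<sigma>) t * D t)"
      unfolding ind_def
      by (rule sum_indicator_subset_or_disjoint[OF Sigc_subset_or_disjoint_PiS[OF I J h m \<sigma>]])
    also have "\<dots> \<le> max 0 (ext_regret (Act J) (aext \<sigma> J) (ext_util i \<sigma> J) T)"
      using deviation_on_PiS_le_ext_regret[OF i J \<sigma> y, of T] unfolding ind_def D_def
      by (intro max.mono) simp_all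
    finally show ?thesis .
  qed
  then have "(\<Sum>\<sigma>\<in>Sigc i J. \<Sum>t\<in>{1..T}. ind (PiS i \<sigma>) t * ?e t)
      \<le> (\<Sum>\<sigma>\<in>Sigc i J. max 0 (ext_regret (Act J) (aext \<sigma> J) (ext_util i \<sigma> J) T))"
    by (rule sum_mono)
  then show ?thesis unfolding D_def[symmetric] ind_def[symmetric] split using int by linarith
qed

lemma local_regret_bound:
  assumes i: "i \<in> Pl" and I: "I \<in> Inf i" and a: "a \<in> Act I" and J: "J \<in> Inf i" and y: "y \<in> Act J"
    and below: "J = I \<or> (\<forall>h\<in>nodes J. (I, b) \<in> set (seq i h))"
  shows "(\<Sum>t\<in>{1..T}. (if \<pi>s t i \<in> PiS i (I, a) then 1 else 0) *
            (local_u i (\<pi>s t) J y - local_u i (\<pi>s t) J (\<pi>s t i J))) \<le> infoset_regret i J T"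
proof (cases "J = I")
  case True
  then have "(\<Sum>t\<in>{1..T}. (if \<pi>s t i \<in> PiS i (I, a) then 1 else 0) *
            (local_u i (\<pi>s t) J y - local_u i (\<pi>s t) J (\<pi>s t i J)))
      \<le> int_regret (Act I) (aint I) (int_util i I) T"
    using local_deviation_at_infoset[OF i I a] y by simp
  also have "\<dots> \<le> (real (card (Act I)) + 1) * max 0 (int_regret (Act I) (aint I) (int_util i I) T)"
    by (simp add: distrib_right add_increasing)
  also have "\<dots> \<le> infoset_regret i J T"
    using True by (simp add: infoset_regret_def sum_nonneg)
  finally show ?thesis .
next
  case False
  obtain h where h: "h \<in> nodes J" using ex_node[OF J] by blast
  then obtain m where m: "m < length h" "owner (take m h) = Some i" "info (take m h) = I"
    using below False unfolding set_seq by blast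
  then have "take m h \<in> nodes I" using take_in_nodes[OF nodes_InfD(1)[OF J h]] by blast
  note local_deviation_below_infoset[OF i I J h m(1) this y, of a T]
  also have "real (card (Act J)) * max 0 (int_regret (Act J) (aint J) (int_util i J) T)
      + (\<Sum>\<sigma>\<in>Sigc i J. max 0 (ext_regret (Act J) (aext \<sigma> J) (ext_util i \<sigma> J) T))
      \<le> infoset_regret i J T"
    unfolding infoset_regret_def by (simp add: distrib_right)
  finally show ?thesis .
qed

text \<open>Unrolling V along the infosets that p reaches below I splits the regret of deviating to p
  into local regrets, one per infoset; the constant only counts at most |Inf i| children per level.\<close>

lemma value_regret_bound:
  assumes i: "i \<in> Pl" and I: "I \<in> Inf i" and a: "a \<in> Act I" and p: "p \<in> Plans i"
  shows "(\<Sum>t\<in>{1..T}. (if \<pi>s t i \<in> PiS i (I, a) then 1 else 0) *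
            (V i (\<pi>s t) I p - V i (\<pi>s t) I (\<pi>s t i)))
         \<le> (real (card (Inf i)) + 1) ^ card H * player_regret i T"
proof -
  define w where "w t = (if \<pi>s t i \<in> PiS i (I, a) then 1 else 0::real)" for t
  define F where "F J = (\<Sum>t\<in>{1..T}. w t * (V i (\<pi>s t) J p - V i (\<pi>s t) J (\<pi>s t i)))" for J
  define M where "M = real (card (Inf i)) + 1"
  define S where "S = player_regret i T"
  have S: "0 \<le> S" by (simp add: S_def player_regret_nonneg)
  have "F J \<le> M ^ n * S"
    if "height_le n J" "J \<in> Inf i" "J = I \<or> (\<forall>h\<in>nodes J. (I, p I) \<in> set (seq i h))" for n J
    using that
  proof (induction n arbitrary: J)
    case 0
    then show ?case using not_height_le_0 by blast
  next
    case (Suc n)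
    note J = Suc.prems(2)
    have "F J = (\<Sum>t\<in>{1..T}. w t * (local_u i (\<pi>s t) J (p J) - local_u i (\<pi>s t) J (\<pi>s t i J)))
        + (\<Sum>K\<in>C i J (p J). F K)"
      unfolding F_def V_diff_rec[OF J]
      by (simp add: distrib_left sum.distrib sum_distrib_left sum.swap[of _ "C i J (p J)"])
    also have "(\<Sum>t\<in>{1..T}. w t * (local_u i (\<pi>s t) J (p J) - local_u i (\<pi>s t) J (\<pi>s t i J))) \<le> S"
      using local_regret_bound[OF i I a J Plans_Act[OF p J] Suc.prems(3)]
        infoset_regret_le_player_regret[OF J] unfolding w_def S_def by (rule order_trans)
    also have "(\<Sum>K\<in>C i J (p J). F K) \<le> (\<Sum>K\<in>C i J (p J). M ^ n * S)"
    proof (rule sum_mono)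
      fix K assume K: "K \<in> C i J (p J)"
      have "(I, p I) \<in> set (seq i k)" if "k \<in> nodes K" for k
        using C_node_seq[OF J K that] Suc.prems(3) by fastforce
      then show "F K \<le> M ^ n * S" using Suc.IH[OF height_le_C[OF Suc.prems(1) J K] C_Inf[OF K]] by blast
    qed
    also have "\<dots> \<le> real (card (Inf i)) * (M ^ n * S)"
    proof -
      have "card (C i J (p J)) \<le> card (Inf i)" using card_mono[OF finite_Inf] C_Inf by blast
      moreover have "0 \<le> M ^ n * S" using S by (simp add: M_def)
      ultimately show ?thesis by (simp add: mult_right_mono)
    qed
    also have "S + \<dots> \<le> M ^ Suc n * S"
      using mult_right_mono[OF one_le_power[of M n] S] by (simp add: M_def algebra_simps)
    finally show ?case by simp
  qed
  then show ?thesis using I height_le_card_H unfolding F_def w_def M_def S_def by blast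
qed

section \<open>Deviation gains of the empirical frequency\<close>

lemma sum_psig_emp_freq:
  assumes I: "I \<in> Inf i" and \<mu>h: "\<mu>h \<in> Delta (PiI i I)"
  shows "(\<Sum>z\<in>ZI I. psig i (I, a) (emp_freq \<pi>s T) \<mu>h z * u i z) =
    (\<Sum>p\<in>PiI i I. \<mu>h p * (\<Sum>t\<in>{1..T}. (if \<pi>s t i \<in> PiS i (I, a) then 1 else 0) *
        reach_value i (\<pi>s t) I p)) / real T"
proof -
  define w where "w t = (if \<pi>s t i \<in> PiS i (I, a) then 1 else 0::real)" for t
  define oth where "oth t z = (if others_reach i (\<pi>s t) z then 1 else 0::real)" for t z
  define g where "g t p z = (if reaches i p z then oth t z * pcz z * u i z else 0)" for t p z
  have joint_sum: "(\<Sum>\<pi>\<in>{\<pi>\<in>Joint. \<pi> i \<in> PiS i (I, a) \<and> others_reach i \<pi> z}. emp_freq \<pi>s T \<pi>) =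
      (\<Sum>t\<in>{1..T}. w t * oth t z) / real T" for z
    unfolding sum_emp_freq[OF finite_Joint_Collect] using joint
    by (intro arg_cong[where f="\<lambda>x. x / real T"] sum.cong) (auto simp: w_def oth_def)
  have "psig i (I, a) (emp_freq \<pi>s T) \<mu>h z * u i z =
      (\<Sum>p\<in>PiI i I. \<Sum>t\<in>{1..T}. \<mu>h p * (w t * g t p z)) / real T" for z
  proof -
    have "psig i (I, a) (emp_freq \<pi>s T) \<mu>h z * u i z =
      (\<Sum>t\<in>{1..T}. w t * oth t z) * (\<Sum>p\<in>PiI i I. if reaches i p z then \<mu>h p else 0) * pcz z * u i z
        / real T"
      unfolding psig_def joint_sum sum_PiZ_Delta[OF \<mu>h] by simp
    also have "(\<Sum>t\<in>{1..T}. w t * oth t z) * (\<Sum>p\<in>PiI i I. if reaches i p z then \<mu>h p else 0)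
        * pcz z * u i z = (\<Sum>p\<in>PiI i I. \<Sum>t\<in>{1..T}. \<mu>h p * (w t * g t p z))"
      unfolding sum_product unfolding sum_distrib_right
      by (subst sum.swap) (intro sum.cong refl, simp add: g_def)
    finally show ?thesis .
  qed
  then have "(\<Sum>z\<in>ZI I. psig i (I, a) (emp_freq \<pi>s T) \<mu>h z * u i z)
      = (\<Sum>z\<in>ZI I. \<Sum>p\<in>PiI i I. \<Sum>t\<in>{1..T}. \<mu>h p * (w t * g t p z)) / real T"
    by (simp add: sum_divide_distrib)
  also have "\<dots> = (\<Sum>p\<in>PiI i I. \<mu>h p * (\<Sum>t\<in>{1..T}. w t * (\<Sum>z\<in>ZI I. g t p z))) / real T"
    by (simp only: sum.swap[of _ "ZI I"] sum_distrib_left)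
  finally show ?thesis unfolding reach_value_def g_def oth_def w_def by simp
qed

lemma sum_q_emp_freq:
  assumes i: "i \<in> Pl" and I: "I \<in> Inf i"
  shows "(\<Sum>z\<in>ZIa I a. q (emp_freq \<pi>s T) z * u i z) =
    (\<Sum>t\<in>{1..T}. (if \<pi>s t i \<in> PiS i (I, a) then 1 else 0) * reach_value i (\<pi>s t) I (\<pi>s t i)) / real T"
proof -
  define r where "r t z = (if \<forall>j\<in>Pl. reaches j (\<pi>s t j) z then 1 else 0::real)" for t z
  have "q (emp_freq \<pi>s T) z = (\<Sum>t\<in>{1..T}. r t z) / real T * pcz z" for z
    unfolding q_def sum_emp_freq[OF finite_Joint_Collect] using joint by (simp add: r_def)
  then have "(\<Sum>z\<in>ZIa I a. q (emp_freq \<pi>s T) z * u i z)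
      = (\<Sum>t\<in>{1..T}. \<Sum>z\<in>ZIa I a. r t z * pcz z * u i z) / real T"
    by (simp add: sum_divide_distrib sum_distrib_right sum.swap[of _ "ZIa I a"])
  then show ?thesis using sum_ZIa_reached[OF i I joint] by (simp add: r_def)
qed

lemma deviation_bound:
  assumes i: "i \<in> Pl" and I: "I \<in> Inf i" and a: "a \<in> Act I" and \<mu>h: "\<mu>h \<in> Delta (PiI i I)"
  shows "(\<Sum>z\<in>ZI I. psig i (I, a) (emp_freq \<pi>s T) \<mu>h z * u i z) - (\<Sum>z\<in>ZIa I a. q (emp_freq \<pi>s T) z * u i z)
    \<le> (real (card (Inf i)) + 1) ^ card H * player_regret i T / real T"
proof -
  define w where "w t = (if \<pi>s t i \<in> PiS i (I, a) then 1 else 0::real)" for t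
  define W where "W t p = reach_value i (\<pi>s t) I p" for t p
  define B where "B = (real (card (Inf i)) + 1) ^ card H * player_regret i T"
  have \<mu>h_sum: "sum \<mu>h (PiI i I) = 1" and \<mu>h_nonneg: "0 \<le> \<mu>h p" for p
    using \<mu>h by (auto simp: Delta_def)
  have dev: "(\<Sum>t\<in>{1..T}. w t * (W t p - W t (\<pi>s t i))) \<le> B" if p: "p \<in> PiI i I" for p
  proof -
    have "w t * (W t p - W t (\<pi>s t i)) = w t * (V i (\<pi>s t) I p - V i (\<pi>s t) I (\<pi>s t i))" for t
      by (cases "\<pi>s t i \<in> PiS i (I, a)")
        (simp_all add: w_def W_def V_eq_reach_value[OF I p] V_eq_reach_value[OF I])
    then have "(\<Sum>t\<in>{1..T}. w t * (W t p - W t (\<pi>s t i)))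
        = (\<Sum>t\<in>{1..T}. w t * (V i (\<pi>s t) I p - V i (\<pi>s t) I (\<pi>s t i)))"
      by (intro sum.cong) simp_all
    also have "\<dots> \<le> B"
      unfolding w_def B_def using p by (intro value_regret_bound[OF i I a]) (simp add: PiI_def)
    finally show ?thesis .
  qed
  have "(\<Sum>p\<in>PiI i I. \<mu>h p * (\<Sum>t\<in>{1..T}. w t * W t p)) - (\<Sum>t\<in>{1..T}. w t * W t (\<pi>s t i))
      = (\<Sum>p\<in>PiI i I. \<mu>h p * (\<Sum>t\<in>{1..T}. w t * (W t p - W t (\<pi>s t i))))"
    by (simp add: right_diff_distrib sum_subtractf sum_distrib_right[symmetric] \<mu>h_sum)
  also have "\<dots> \<le> (\<Sum>p\<in>PiI i I. \<mu>h p * B)"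
    by (intro sum_mono mult_left_mono dev \<mu>h_nonneg)
  also have "\<dots> = B" by (simp add: sum_distrib_right[symmetric] \<mu>h_sum)
  finally show ?thesis
    unfolding sum_psig_emp_freq[OF I \<mu>h] sum_q_emp_freq[OF i I] w_def[symmetric] W_def[symmetric] B_def
    by (simp add: divide_right_mono flip: diff_divide_distrib)
qed

definition regret_rate :: "nat \<Rightarrow> real" where
  "regret_rate T = (\<Sum>i\<in>Pl. (real (card (Inf i)) + 1) ^ card H * player_regret i T) / real T"

lemma delta_emp_freq_le:
  assumes T: "0 < T"
  shows "delta (emp_freq \<pi>s T) \<le> ereal (regret_rate T)"
  unfolding delta_def
proof (rule SUP_least, rule SUP_least)
  fix i \<sigma> assume i: "i \<in> Pl" and "\<sigma> \<in> {(I, a). I \<in> Inf i \<and> a \<in> Act I}"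
  then obtain I a where \<sigma>: "\<sigma> = (I, a)" and I: "I \<in> Inf i" and a: "a \<in> Act I" by blast
  let ?q = "\<Sum>z\<in>ZIa I a. q (emp_freq \<pi>s T) z * u i z"
  have "(real (card (Inf i)) + 1) ^ card H * player_regret i T / real T \<le> regret_rate T"
    unfolding regret_rate_def using T i
    by (intro divide_right_mono member_le_sum finite_Pl) (simp_all add: player_regret_nonneg)
  then have "(\<Sum>z\<in>ZI I. psig i (I, a) (emp_freq \<pi>s T) \<mu>h z * u i z) \<le> regret_rate T + ?q"
    if "\<mu>h \<in> Delta (PiI i I)" for \<mu>h
    using deviation_bound[OF i I a that, of T] by simp
  then have "(SUP \<mu>h\<in>Delta (PiI i I). ereal (\<Sum>z\<in>ZI I. psig i (I, a) (emp_freq \<pi>s T) \<mu>h z * u i z))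
      \<le> ereal (regret_rate T + ?q)"
    by (intro SUP_least) simp
  then show "(SUP \<mu>h\<in>Delta (PiI i (fst \<sigma>)). ereal (\<Sum>z\<in>ZI (fst \<sigma>).
      psig i \<sigma> (emp_freq \<pi>s T) \<mu>h z * u i z))
      - ereal (\<Sum>z\<in>ZIa (fst \<sigma>) (snd \<sigma>). q (emp_freq \<pi>s T) z * u i z) \<le> ereal (regret_rate T)"
    using \<sigma> by (simp add: ereal_minus_le)
qed

lemma regret_rate_tendsto_0:
  assumes int: "\<And>i J. i \<in> Pl \<Longrightarrow> J \<in> Inf i \<Longrightarrow>
      (\<lambda>T. int_regret (Act J) (aint J) (int_util i J) T) \<in> o(\<lambda>T. real T)"
    and ext: "\<And>i J \<sigma>. i \<in> Pl \<Longrightarrow> J \<in> Inf i \<Longrightarrow> \<sigma> \<in> Sigc i J \<Longrightarrow>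
      (\<lambda>T. ext_regret (Act J) (aext \<sigma> J) (ext_util i \<sigma> J) T) \<in> o(\<lambda>T. real T)"
  shows "(regret_rate \<longlongrightarrow> 0) sequentially"
proof -
  have infoset: "((\<lambda>T. infoset_regret i J T / real T) \<longlongrightarrow> 0) sequentially"
    if i: "i \<in> Pl" and J: "J \<in> Inf i" for i J
  proof -
    have "infoset_regret i J T / real T =
        (real (card (Act J)) + 1) * (max 0 (int_regret (Act J) (aint J) (int_util i J) T) / real T)
        + (\<Sum>\<sigma>\<in>Sigc i J. max 0 (ext_regret (Act J) (aext \<sigma> J) (ext_util i \<sigma> J) T) / real T)" for T
      by (simp add: infoset_regret_def add_divide_distrib sum_divide_distrib)
    then show ?thesis
      by (simp only:) (intro tendsto_add_zero tendsto_mult_right_zero tendsto_null_sum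
          smallo_imp_max0_div_tendsto_0 int ext i J)
  qed
  have "regret_rate = (\<lambda>T. \<Sum>i\<in>Pl. (real (card (Inf i)) + 1) ^ card H *
      (\<Sum>J\<in>Inf i. infoset_regret i J T / real T))"
    by (simp add: fun_eq_iff regret_rate_def player_regret_def sum_divide_distrib sum_distrib_left)
  then show ?thesis
    by (simp only:) (intro tendsto_null_sum tendsto_mult_right_zero infoset)
qed

lemma emp_freq_tendsto_EFCE:
  assumes "\<And>i J. i \<in> Pl \<Longrightarrow> J \<in> Inf i \<Longrightarrow>
      (\<lambda>T. int_regret (Act J) (aint J) (int_util i J) T) \<in> o(\<lambda>T. real T)"
    and "\<And>i J \<sigma>. i \<in> Pl \<Longrightarrow> J \<in> Inf i \<Longrightarrow> \<sigma> \<in> Sigc i J \<Longrightarrow>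
      (\<lambda>T. ext_regret (Act J) (aext \<sigma> J) (ext_util i \<sigma> J) T) \<in> o(\<lambda>T. real T)"
  shows "limsup (\<lambda>T. delta (emp_freq \<pi>s T)) \<le> 0 \<and>
    (\<forall>\<epsilon>>0. eventually (\<lambda>T. eps_EFCE \<epsilon> (emp_freq \<pi>s T)) sequentially)"
proof (intro conjI allI impI)
  have lim: "(regret_rate \<longlongrightarrow> 0) sequentially" by (rule regret_rate_tendsto_0[OF assms])
  have bound: "eventually (\<lambda>T. 0 < T \<and> delta (emp_freq \<pi>s T) \<le> ereal (regret_rate T)) sequentially"
    using eventually_gt_at_top[of 0] by eventually_elim (simp add: delta_emp_freq_le)
  have "limsup (\<lambda>T. delta (emp_freq \<pi>s T)) \<le> limsup (\<lambda>T. ereal (regret_rate T))"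
    using bound by (intro Limsup_mono) (auto elim: eventually_mono)
  also have "limsup (\<lambda>T. ereal (regret_rate T)) = 0"
    using lim_imp_Limsup[of sequentially "\<lambda>T. ereal (regret_rate T)" 0] lim by (simp add: zero_ereal_def)
  finally show "limsup (\<lambda>T. delta (emp_freq \<pi>s T)) \<le> 0" .
  fix \<epsilon> :: real assume "0 < \<epsilon>"
  with lim have "eventually (\<lambda>T. regret_rate T < \<epsilon>) sequentially" by (rule order_tendstoD(2))
  with bound show "eventually (\<lambda>T. eps_EFCE \<epsilon> (emp_freq \<pi>s T)) sequentially"
  proof eventually_elim
    case (elim T)
    then have "delta (emp_freq \<pi>s T) \<le> ereal \<epsilon>" using order_trans by fastforce
    then show ?case using emp_freq_Delta[OF joint finite_Joint] elim by (simp add: eps_EFCE_def)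
  qed
qed

end

theorem theorem2:
  fixes Pl :: "'p set" and H :: "'a list set" and owner :: "'a list \<Rightarrow> 'p option"
    and info :: "'a list \<Rightarrow> 'i" and pc :: "'a list \<Rightarrow> 'a \<Rightarrow> real" and u :: "'p \<Rightarrow> 'a list \<Rightarrow> real"
    and M :: "'w measure"
    and \<pi> :: "nat \<Rightarrow> 'w \<Rightarrow> 'p \<Rightarrow> 'i \<Rightarrow> 'a"
    and aint :: "'i \<Rightarrow> nat \<Rightarrow> 'w \<Rightarrow> 'a"
    and aext :: "'i \<times> 'a \<Rightarrow> 'i \<Rightarrow> nat \<Rightarrow> 'w \<Rightarrow> 'a"
  assumes game: "wf_efg Pl H owner info pc"
    and prob: "prob_space M"
    and aint_range: "\<And>i I t \<omega>. i \<in> Pl \<Longrightarrow> I \<in> efg.Inf H owner info i \<Longrightarrow>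
           aint I t \<omega> \<in> efg.Act H owner info I"
    and aext_range: "\<And>i I \<sigma> t \<omega>. i \<in> Pl \<Longrightarrow> I \<in> efg.Inf H owner info i \<Longrightarrow>
           \<sigma> \<in> efg.Sigc H owner info i I \<Longrightarrow> aext \<sigma> I t \<omega> \<in> efg.Act H owner info I"
    and plans: "\<And>t \<omega>. \<pi> t \<omega> \<in> efg.Joint Pl H owner info"
    and icfr: "\<And>t \<omega> i I. i \<in> Pl \<Longrightarrow> I \<in> efg.Inf H owner info i \<Longrightarrow>
           \<pi> t \<omega> i I =
             (if \<pi> t \<omega> i \<in> efg.PiI H owner info i I then aint I t \<omega>
              else aext (efg.sigma_of H owner info i I (\<pi> t \<omega> i)) I t \<omega>)"
    and no_int_regret: "\<And>i I. i \<in> Pl \<Longrightarrow> I \<in> efg.Inf H owner info i \<Longrightarrow>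
           AE \<omega> in M. (\<lambda>T. int_regret (efg.Act H owner info I) (\<lambda>t. aint I t \<omega>)
              (\<lambda>t a. (if \<pi> t \<omega> i \<in> efg.PiI H owner info i I then 1 else 0) *
                     efg.local_u Pl H owner info pc u i (\<pi> t \<omega>) I a) T)
             \<in> o(\<lambda>T. real T)"
    and no_ext_regret: "\<And>i I \<sigma>. i \<in> Pl \<Longrightarrow> I \<in> efg.Inf H owner info i \<Longrightarrow>
           \<sigma> \<in> efg.Sigc H owner info i I \<Longrightarrow>
           AE \<omega> in M. (\<lambda>T. ext_regret (efg.Act H owner info I) (\<lambda>t. aext \<sigma> I t \<omega>)
              (\<lambda>t a. (if \<pi> t \<omega> i \<in> efg.PiS H owner info i \<sigma> then 1 else 0) *
                     efg.local_u Pl H owner info pc u i (\<pi> t \<omega>) I a) T)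
             \<in> o(\<lambda>T. real T)"
  shows "AE \<omega> in M.
           limsup (\<lambda>T. efg.delta Pl H owner info pc u (emp_freq (\<lambda>t. \<pi> t \<omega>) T)) \<le> 0 \<and>
           (\<forall>\<epsilon>>0. eventually (\<lambda>T. efg.eps_EFCE Pl H owner info pc u \<epsilon> (emp_freq (\<lambda>t. \<pi> t \<omega>) T))
                      sequentially)"
proof -
  interpret wf_efg Pl H owner info pc u by (rule game)
  have "AE \<omega> in M. \<forall>i\<in>Pl. \<forall>I\<in>Inf i.
      (\<lambda>T. int_regret (Act I) (\<lambda>t. aint I t \<omega>)
        (\<lambda>t a. (if \<pi> t \<omega> i \<in> PiI i I then 1 else 0) * local_u i (\<pi> t \<omega>) I a) T) \<in> o(\<lambda>T. real T) \<and>
      (\<forall>\<sigma>\<in>Sigc i I. (\<lambda>T. ext_regret (Act I) (\<lambda>t. aext \<sigma> I t \<omega>)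
        (\<lambda>t a. (if \<pi> t \<omega> i \<in> PiS i \<sigma> then 1 else 0) * local_u i (\<pi> t \<omega>) I a) T) \<in> o(\<lambda>T. real T))"
    by (intro AE_finite_allI finite_Pl finite_Inf finite_Sigc eventually_conj no_int_regret no_ext_regret)
  then show ?thesis
  proof (rule eventually_mono)
    fix \<omega> assume regrets: "\<forall>i\<in>Pl. \<forall>I\<in>Inf i.
      (\<lambda>T. int_regret (Act I) (\<lambda>t. aint I t \<omega>)
        (\<lambda>t a. (if \<pi> t \<omega> i \<in> PiI i I then 1 else 0) * local_u i (\<pi> t \<omega>) I a) T) \<in> o(\<lambda>T. real T) \<and>
      (\<forall>\<sigma>\<in>Sigc i I. (\<lambda>T. ext_regret (Act I) (\<lambda>t. aext \<sigma> I t \<omega>)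
        (\<lambda>t a. (if \<pi> t \<omega> i \<in> PiS i \<sigma> then 1 else 0) * local_u i (\<pi> t \<omega>) I a) T) \<in> o(\<lambda>T. real T))"
    interpret icfr_run Pl H owner info pc u "\<lambda>t. \<pi> t \<omega>" "\<lambda>J t. aint J t \<omega>" "\<lambda>\<sigma> J t. aext \<sigma> J t \<omega>"
      by unfold_locales (use plans aint_range icfr in auto)
    show "limsup (\<lambda>T. delta (emp_freq (\<lambda>t. \<pi> t \<omega>) T)) \<le> 0 \<and>
        (\<forall>\<epsilon>>0. eventually (\<lambda>T. eps_EFCE \<epsilon> (emp_freq (\<lambda>t. \<pi> t \<omega>) T)) sequentially)"
      using regrets by (intro emp_freq_tendsto_EFCE) (simp_all add: int_util_def[abs_def] ext_util_def[abs_def])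
  qed
qed

end
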